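(* Let $X$ be one of the following Banach spaces: (i) $L^1([0,1])$; (ii) $C([0,1])$; (iii) $c_0$; (iv) the space $\ell^2$ equipped with the norm $|x|=\max\{\|x\|_\infty, \|x\|_2/\sqrt2\}$. Then there exist a nontrivial weakly compact convex subset $K$ of $X$ and a mapping $T:K\to K$ such that $T$ is not a Kannan mapping, $T$ is an orbitally Kannan mapping which diminishes the radius of orbits, and $T$ has no fixed point.
   Context: Nontrivial means containing more than one point; $\|\cdot\|_\infty$ and $\|\cdot\|_2$ are the usual sup and Euclidean norms on $\ell^2$. For $x\in X$, $A\subseteq X$: $r_x(A)=\sup\{\|x-y\|:y\in A\}$; $O_T(x)=\{x,Tx,T^2x,\dots\}$. $T$ is Kannan if $\|Tx-Ty\|\le\frac12(\|x-Tx\|+\|y-Ty\|)$ for all $x,y\in K$; orbitally Kannan if $\|Tx-Ty\|\le\frac12(r_x(O_T(x))+r_y(O_T(y)))$ for all $x,y\in K$; diminishes the radius of orbits if $r_{Tx}(O_T(Tx))\le r_x(O_T(x))$ for all $x\in K$. *)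

theory Defs
  imports "HOL-Analysis.Analysis" "HOL-Library.Function_Algebras"
begin

instantiation "fun" :: (type, real_vector) real_vector
begin
definition scaleR_fun :: "real \<Rightarrow> ('a \<Rightarrow> 'b) \<Rightarrow> 'a \<Rightarrow> 'b"
  where "scaleR_fun r f = (\<lambda>x. r *\<^sub>R f x)"
instance
  by standard (auto simp: scaleR_fun_def plus_fun_def fun_eq_iff scaleR_add_right scaleR_add_left)
end

lemma scaleR_fun_apply [simp]: "(r *\<^sub>R f) x = r *\<^sub>R f x"
  by (simp add: scaleR_fun_def)

definition l1rel :: "(real \<Rightarrow> real) \<Rightarrow> (real \<Rightarrow> real) \<Rightarrow> bool" where
  "l1rel f g \<longleftrightarrow> integrable (lebesgue_on {0..1}) f \<and> integrable (lebesgue_on {0..1}) g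
      \<and> (AE t in lebesgue_on {0..1}. f t = g t)"

lemma l1rel_part_equivp: "part_equivp l1rel"
proof (rule part_equivpI)
  show "\<exists>x. l1rel x x" by (rule exI[of _ "\<lambda>_. 0"]) (simp add: l1rel_def)
  show "symp l1rel" unfolding symp_def l1rel_def by (auto elim: AE_mp)
  show "transp l1rel" unfolding transp_def l1rel_def by (auto elim!: AE_mp)
qed

quotient_type L1 = "real \<Rightarrow> real" / partial: l1rel
  by (rule l1rel_part_equivp)

instantiation L1 :: real_vector
begin
lift_definition zero_L1 :: L1 is "\<lambda>_. 0" by (simp add: l1rel_def)
lift_definition plus_L1 :: "L1 \<Rightarrow> L1 \<Rightarrow> L1" is "\<lambda>f g t. f t + g t"
  unfolding l1rel_def by (auto elim!: AE_mp)
lift_definition uminus_L1 :: "L1 \<Rightarrow> L1" is "\<lambda>f t. - f t"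
  unfolding l1rel_def by (auto elim!: AE_mp)
lift_definition minus_L1 :: "L1 \<Rightarrow> L1 \<Rightarrow> L1" is "\<lambda>f g t. f t - g t"
  unfolding l1rel_def by (auto elim!: AE_mp)
lift_definition scaleR_L1 :: "real \<Rightarrow> L1 \<Rightarrow> L1" is "\<lambda>r f t. r * f t"
  unfolding l1rel_def by (auto elim!: AE_mp)
instance
  by standard (transfer; auto simp: l1rel_def algebra_simps)+
end

lift_definition norm_L1 :: "L1 \<Rightarrow> real" is "\<lambda>f. integral\<^sup>L (lebesgue_on {0..1}) (\<lambda>t. \<bar>f t\<bar>)"
  unfolding l1rel_def by (auto intro: integral_cong_AE)

definition C01 :: "(real \<Rightarrow> real) set" where
  "C01 = {f. continuous_on {0..1} f \<and> (\<forall>t. t \<notin> {0..1} \<longrightarrow> f t = 0)}"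
definition norm_C01 :: "(real \<Rightarrow> real) \<Rightarrow> real" where
  "norm_C01 f = Sup ((\<lambda>t. \<bar>f t\<bar>) ` {0..1})"

definition c0 :: "(nat \<Rightarrow> real) set" where
  "c0 = {x. x \<longlonglongrightarrow> 0}"
definition sup_norm_seq :: "(nat \<Rightarrow> real) \<Rightarrow> real" where
  "sup_norm_seq x = Sup (range (\<lambda>n. \<bar>x n\<bar>))"

definition l2 :: "(nat \<Rightarrow> real) set" where
  "l2 = {x. summable (\<lambda>n. (x n)\<^sup>2)}"
definition l2_norm_seq :: "(nat \<Rightarrow> real) \<Rightarrow> real" where
  "l2_norm_seq x = sqrt (\<Sum>n. (x n)\<^sup>2)"
definition norm_l2_new :: "(nat \<Rightarrow> real) \<Rightarrow> real" where
  "norm_l2_new x = max (sup_norm_seq x) (l2_norm_seq x / sqrt 2)"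

definition bdd_lin_functionals :: "'a::real_vector set \<Rightarrow> ('a \<Rightarrow> real) \<Rightarrow> ('a \<Rightarrow> real) set" where
  "bdd_lin_functionals V N =
     {f. (\<forall>x\<in>V. \<forall>y\<in>V. f (x + y) = f x + f y) \<and> (\<forall>x\<in>V. \<forall>c. f (c *\<^sub>R x) = c * f x)
         \<and> (\<exists>C. \<forall>x\<in>V. \<bar>f x\<bar> \<le> C * N x)}"

definition weak_topology :: "'a::real_vector set \<Rightarrow> ('a \<Rightarrow> real) \<Rightarrow> 'a topology" where
  "weak_topology V N =
     pullback_topology V (\<lambda>x. restrict (\<lambda>f. f x) (bdd_lin_functionals V N))
       (product_topology (\<lambda>_. euclideanreal) (bdd_lin_functionals V N))"

definition orbit :: "('a \<Rightarrow> 'a) \<Rightarrow> 'a \<Rightarrow> 'a set" where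
  "orbit T x = range (\<lambda>n. (T ^^ n) x)"

definition radius :: "('a::real_vector \<Rightarrow> real) \<Rightarrow> 'a \<Rightarrow> 'a set \<Rightarrow> real" where
  "radius N x A = Sup ((\<lambda>y. N (x - y)) ` A)"

definition kannan :: "('a::real_vector \<Rightarrow> real) \<Rightarrow> 'a set \<Rightarrow> ('a \<Rightarrow> 'a) \<Rightarrow> bool" where
  "kannan N K T \<longleftrightarrow> (\<forall>x\<in>K. \<forall>y\<in>K. N (T x - T y) \<le> (N (x - T x) + N (y - T y)) / 2)"

definition orbitally_kannan :: "('a::real_vector \<Rightarrow> real) \<Rightarrow> 'a set \<Rightarrow> ('a \<Rightarrow> 'a) \<Rightarrow> bool" where
  "orbitally_kannan N K T \<longleftrightarrow>
     (\<forall>x\<in>K. \<forall>y\<in>K. N (T x - T y) \<le> (radius N x (orbit T x) + radius N y (orbit T y)) / 2)"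

definition diminishes_orbit_radius :: "('a::real_vector \<Rightarrow> real) \<Rightarrow> 'a set \<Rightarrow> ('a \<Rightarrow> 'a) \<Rightarrow> bool" where
  "diminishes_orbit_radius N K T \<longleftrightarrow>
     (\<forall>x\<in>K. radius N (T x) (orbit T (T x)) \<le> radius N x (orbit T x))"

definition has_fpf_orbitally_kannan_example :: "'a::real_vector set \<Rightarrow> ('a \<Rightarrow> real) \<Rightarrow> bool" where
  "has_fpf_orbitally_kannan_example V N \<longleftrightarrow>
     (\<exists>K T. K \<subseteq> V \<and> (\<exists>x\<in>K. \<exists>y\<in>K. x \<noteq> y) \<and> convex K \<and> compactin (weak_topology V N) K
        \<and> T ` K \<subseteq> K \<and> \<not> kannan N K T \<and> orbitally_kannan N K T
        \<and> diminishes_orbit_radius N K T \<and> (\<forall>x\<in>K. T x \<noteq> x))"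

end

theory Submission
  imports Defs
begin

text \<open>
  In each space we find a sequence \<open>u\<close> whose terms are at mutual distance 1 and such that
  every point of the convex set \<open>K = {\<Sum>n. t\<^sub>n u\<^sub>n | t\<^sub>n \<ge> 0, \<Sum>n. t\<^sub>n \<le> 1}\<close> has distance
  almost 1 from \<open>u\<^sub>m\<close> for infinitely many \<open>m\<close>. The map \<open>T\<close> that shifts \<open>u\<^sub>n\<close> to
  \<open>u\<^sub>n\<^sub>+\<^sub>1\<close> and sends every other point of \<open>K\<close> to \<open>u\<^sub>0\<close> then has orbit radii at least 1
  while all its values are at most 1 apart: it is orbitally Kannan, diminishes the radius of
  orbits and has no fixed point, but fails the Kannan condition at \<open>u\<^sub>0/2\<close> and \<open>u\<^sub>0\<close>.
  \<open>K\<close> is weakly compact because the simplex of coefficients is compact in the product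
  topology and \<open>\<parallel>\<Sum>k\<in>F. u\<^sub>k\<parallel> = O(\<surd>card F)\<close> forces every bounded functional to vanish
  along \<open>u\<close>. The sequences are the unit vectors in \<open>c\<^sub>0\<close> and \<open>\<ell>\<^sup>2\<close>, tent functions
  with disjoint supports in \<open>C([0,1])\<close> and the Rademacher functions in \<open>L\<^sup>1([0,1])\<close>.
\<close>

section \<open>Shifting along a separated sequence\<close>

definition shift_along :: "(nat \<Rightarrow> 'a) \<Rightarrow> 'a \<Rightarrow> 'a" where
  "shift_along u x = (if x \<in> range u then u (Suc (inv u x)) else u 0)"

lemma shift_along_apply: "inj u \<Longrightarrow> shift_along u (u n) = u (Suc n)"
  by (simp add: shift_along_def)

lemma shift_along_outside: "x \<notin> range u \<Longrightarrow> shift_along u x = u 0"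
  by (simp add: shift_along_def)

lemma shift_along_in_range: "shift_along u x \<in> range u"
  by (simp add: shift_along_def)

lemma funpow_shift_along: "inj u \<Longrightarrow> (shift_along u ^^ k) (u n) = u (n + k)"
  by (induction k) (simp_all add: shift_along_apply)

lemma orbit_shift_along_subset: "orbit (shift_along u) x \<subseteq> insert x (range u)"
proof -
  have "(shift_along u ^^ k) x \<in> insert x (range u)" for k
    using shift_along_in_range[of u "(shift_along u ^^ (k - 1)) x"] by (cases k) simp_all
  then show ?thesis
    unfolding orbit_def by blast
qed

lemma orbit_shift_along_eventually:
  assumes "inj u"
  shows "\<exists>n0. \<forall>m\<ge>n0. u m \<in> orbit (shift_along u) x"
proof -
  obtain n0 where n0: "shift_along u x = u n0"
    using shift_along_in_range[of u x] by (rule rangeE)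
  have "u m = (shift_along u ^^ Suc (m - n0)) x" if "m \<ge> n0" for m
  proof -
    have "(shift_along u ^^ Suc (m - n0)) x = (shift_along u ^^ (m - n0)) (u n0)"
      by (simp only: funpow_Suc_right comp_apply n0)
    also have "\<dots> = u m"
      using funpow_shift_along[OF assms, of "m - n0" n0] that by simp
    finally show ?thesis by simp
  qed
  then show ?thesis
    unfolding orbit_def by blast
qed

lemma shift_along_neq:
  assumes "inj u"
  shows "shift_along u x \<noteq> x"
proof (cases "x \<in> range u")
  case True
  then obtain n where "x = u n"
    by blast
  then show ?thesis
    using assms by (simp add: shift_along_apply inj_eq)
next
  case False
  then show ?thesis
    using shift_along_in_range[of u x] by auto
qed

lemma radius_orbit_shift_along_ge:
  assumes "inj u"
    and bounded: "\<And>m. N (x - u m) \<le> B"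
    and far: "\<And>\<epsilon> n. 0 < \<epsilon> \<Longrightarrow> \<exists>m\<ge>n. 1 - \<epsilon> < N (x - u m)"
  shows "1 \<le> radius N x (orbit (shift_along u) x)"
proof (rule ccontr)
  let ?r = "radius N x (orbit (shift_along u) x)"
  assume "\<not> 1 \<le> ?r"
  have bdd: "bdd_above ((\<lambda>y. N (x - y)) ` orbit (shift_along u) x)"
  proof (rule bdd_aboveI2)
    fix y assume "y \<in> orbit (shift_along u) x"
    then have "y = x \<or> y \<in> range u"
      using orbit_shift_along_subset[of u x] by blast
    then show "N (x - y) \<le> max (N 0) B"
      using bounded by (auto simp: le_max_iff_disj)
  qed
  obtain n0 where n0: "\<And>m. n0 \<le> m \<Longrightarrow> u m \<in> orbit (shift_along u) x"
    using orbit_shift_along_eventually[OF \<open>inj u\<close>] by blast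
  obtain m where "n0 \<le> m" and "1 - (1 - ?r) < N (x - u m)"
    using far[of "1 - ?r" n0] \<open>\<not> 1 \<le> ?r\<close> by auto
  moreover have "N (x - u m) \<le> ?r"
    unfolding radius_def using n0[OF \<open>n0 \<le> m\<close>] bdd by (intro cSup_upper) auto
  ultimately show False
    by simp
qed

lemma radius_orbit_shift_along_le:
  assumes "inj u" "\<And>i j. N (u i - u j) \<le> 1"
  shows "radius N (u n) (orbit (shift_along u) (u n)) \<le> 1"
  unfolding radius_def orbit_def
  using funpow_shift_along[OF assms(1)] assms(2) by (intro cSup_least) auto

lemma not_kannan_shift_along:
  assumes "inj u" "x0 \<in> K" "u 0 \<in> K" "x0 \<notin> range u" "N (x0 - u 0) < N (u 0 - u 1)"
  shows "\<not> kannan N K (shift_along u)"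
proof
  assume "kannan N K (shift_along u)"
  then have "N (shift_along u x0 - shift_along u (u 0))
      \<le> (N (x0 - shift_along u x0) + N (u 0 - shift_along u (u 0))) / 2"
    unfolding kannan_def using assms(2,3) by blast
  then show False
    using assms(5) by (simp add: shift_along_outside[OF assms(4)] shift_along_apply[OF assms(1)])
qed

lemma orbitally_kannan_shift_along:
  assumes "\<And>i j. N (u i - u j) \<le> 1" "\<And>x. x \<in> K \<Longrightarrow> 1 \<le> radius N x (orbit (shift_along u) x)"
  shows "orbitally_kannan N K (shift_along u)"
  unfolding orbitally_kannan_def
proof (intro ballI)
  fix x y assume "x \<in> K" "y \<in> K"
  moreover obtain i where "shift_along u x = u i"
    using shift_along_in_range[of u x] by (rule rangeE)
  moreover obtain j where "shift_along u y = u j"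
    using shift_along_in_range[of u y] by (rule rangeE)
  ultimately show "N (shift_along u x - shift_along u y)
      \<le> (radius N x (orbit (shift_along u) x) + radius N y (orbit (shift_along u) y)) / 2"
    using assms(2)[of x] assms(2)[of y] assms(1)[of i j] by simp
qed

lemma diminishes_orbit_radius_shift_along:
  assumes "inj u" "\<And>i j. N (u i - u j) \<le> 1"
    and "\<And>x. x \<in> K \<Longrightarrow> 1 \<le> radius N x (orbit (shift_along u) x)"
  shows "diminishes_orbit_radius N K (shift_along u)"
  unfolding diminishes_orbit_radius_def
proof
  fix x assume "x \<in> K"
  obtain n where "shift_along u x = u n"
    using shift_along_in_range[of u x] by (rule rangeE)
  moreover have "radius N (u n) (orbit (shift_along u) (u n)) \<le> 1"
    by (rule radius_orbit_shift_along_le[OF assms(1)]) (rule assms(2))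
  ultimately show "radius N (shift_along u x) (orbit (shift_along u) (shift_along u x))
      \<le> radius N x (orbit (shift_along u) x)"
    using assms(3)[OF \<open>x \<in> K\<close>] by simp
qed

lemma has_fpf_orbitally_kannan_example_from_sequence:
  fixes u :: "nat \<Rightarrow> 'a::real_vector"
  assumes K: "K \<subseteq> V" "convex K" "compactin (weak_topology V N) K"
    and u_in_K: "range u \<subseteq> K"
    and N_zero: "N 0 = 0"
    and u_dist: "\<And>i j. i \<noteq> j \<Longrightarrow> N (u i - u j) = 1"
    and bounded: "\<And>x. x \<in> K \<Longrightarrow> \<exists>B. \<forall>m. N (x - u m) \<le> B"
    and far: "\<And>x \<epsilon> n. x \<in> K \<Longrightarrow> 0 < \<epsilon> \<Longrightarrow> \<exists>m\<ge>n. 1 - \<epsilon> < N (x - u m)"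
    and x0: "x0 \<in> K" "0 < N (x0 - u 0)" "N (x0 - u 0) < 1"
  shows "has_fpf_orbitally_kannan_example V N"
proof -
  have u_le_1: "N (u i - u j) \<le> 1" for i j
    using u_dist[of i j] N_zero by (cases "i = j") auto
  have "inj u"
  proof (rule injI, rule ccontr)
    fix i j assume "u i = u j" "i \<noteq> j"
    then show False
      using u_dist[of i j] N_zero by simp
  qed
  have "x0 \<notin> range u"
  proof
    assume "x0 \<in> range u"
    then obtain n where "x0 = u n" by blast
    then show False
      using u_dist[of n 0] N_zero x0(2,3) by (cases "n = 0") simp_all
  qed
  have radius_ge_1: "1 \<le> radius N x (orbit (shift_along u) x)" if x: "x \<in> K" for x
  proof -
    obtain B where "\<And>m. N (x - u m) \<le> B"
      using bounded[OF x] by blast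
    then show ?thesis
      by (rule radius_orbit_shift_along_ge[OF \<open>inj u\<close>]) (rule far[OF x])
  qed
  have "\<not> kannan N K (shift_along u)"
  proof (rule not_kannan_shift_along[OF \<open>inj u\<close> x0(1) _ \<open>x0 \<notin> range u\<close>])
    show "u 0 \<in> K"
      using u_in_K by blast
    show "N (x0 - u 0) < N (u 0 - u 1)"
      using u_dist[of 0 1] x0(3) by simp
  qed
  moreover have "orbitally_kannan N K (shift_along u)"
    using u_le_1 radius_ge_1 by (rule orbitally_kannan_shift_along)
  moreover have "diminishes_orbit_radius N K (shift_along u)"
    using \<open>inj u\<close> u_le_1 radius_ge_1 by (rule diminishes_orbit_radius_shift_along)
  moreover have "\<forall>x\<in>K. shift_along u x \<noteq> x"
    by (simp add: shift_along_neq[OF \<open>inj u\<close>])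
  moreover have "\<exists>x\<in>K. \<exists>y\<in>K. x \<noteq> y"
    using \<open>inj u\<close> u_in_K by (intro bexI[of _ "u 0"] bexI[of _ "u 1"]) (auto simp: inj_eq)
  moreover have "shift_along u ` K \<subseteq> K"
    by (intro image_subsetI subsetD[OF u_in_K] shift_along_in_range)
  ultimately show ?thesis
    unfolding has_fpf_orbitally_kannan_example_def
    using K by (intro exI[of _ K] exI[of _ "shift_along u"] conjI) simp_all
qed

section \<open>Nonnegative sequences with sum at most 1\<close>

definition seq_simplex :: "(nat \<Rightarrow> real) set" where
  "seq_simplex = {t. (\<forall>n. 0 \<le> t n) \<and> (\<forall>M. (\<Sum>n<M. t n) \<le> 1)}"

lemma seq_simplex_nonneg: "t \<in> seq_simplex \<Longrightarrow> 0 \<le> t n"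
  by (simp add: seq_simplex_def)

lemma seq_simplex_summable: "t \<in> seq_simplex \<Longrightarrow> summable t"
  unfolding seq_simplex_def by (rule summableI_nonneg_bounded[where x = 1]) auto

lemma seq_simplex_tendsto_zero: "t \<in> seq_simplex \<Longrightarrow> t \<longlonglongrightarrow> 0"
  by (rule summable_LIMSEQ_zero[OF seq_simplex_summable])

lemma seq_simplex_suminf_le_1: "t \<in> seq_simplex \<Longrightarrow> (\<Sum>n. t n) \<le> 1"
  by (rule suminf_le_const[OF seq_simplex_summable]) (auto simp: seq_simplex_def)

lemma seq_simplex_tail_le_1:
  assumes "t \<in> seq_simplex"
  shows "(\<Sum>n. t (n + M)) \<le> 1"
proof -
  have "(\<Sum>n. t (n + M)) = (\<Sum>n. t n) - (\<Sum>n<M. t n)"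
    by (rule suminf_minus_initial_segment[OF seq_simplex_summable[OF assms]])
  moreover have "0 \<le> (\<Sum>n<M. t n)"
    using seq_simplex_nonneg[OF assms] by (simp add: sum_nonneg)
  ultimately show ?thesis
    using seq_simplex_suminf_le_1[OF assms] by linarith
qed

lemma seq_simplex_tail_nonneg: "t \<in> seq_simplex \<Longrightarrow> 0 \<le> (\<Sum>n. t (n + M))"
  by (simp add: seq_simplex_nonneg suminf_nonneg summable_ignore_initial_segment seq_simplex_summable)

lemma seq_simplex_le_tail:
  assumes t: "t \<in> seq_simplex" and "M \<le> k"
  shows "t k \<le> (\<Sum>n. t (n + M))"
proof -
  have "summable (\<lambda>n. t (n + M))"
    using seq_simplex_summable[OF t] by (rule summable_ignore_initial_segment)
  then have "(\<Sum>n\<in>{k - M}. t (n + M)) \<le> (\<Sum>n. t (n + M))"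
    by (rule sum_le_suminf) (simp_all add: seq_simplex_nonneg[OF t])
  then show ?thesis
    using \<open>M \<le> k\<close> by simp
qed

lemma seq_simplex_le_1: "t \<in> seq_simplex \<Longrightarrow> t n \<le> 1"
  using seq_simplex_le_tail[of t 0 n] seq_simplex_tail_le_1[of t 0] by simp

lemma seq_simplex_tail_tendsto_zero: "t \<in> seq_simplex \<Longrightarrow> (\<lambda>M. \<Sum>n. t (n + M)) \<longlonglongrightarrow> 0"
  by (rule suminf_exist_split2[OF seq_simplex_summable])

lemma seq_simplex_exists_small:
  assumes "t \<in> seq_simplex" "0 < \<epsilon>"
  obtains m where "n \<le> m" "t m < \<epsilon>"
proof -
  obtain M where M: "\<And>m. M \<le> m \<Longrightarrow> \<bar>t m\<bar> < \<epsilon>"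
    using LIMSEQ_D[OF seq_simplex_tendsto_zero[OF assms(1)] assms(2)] by auto
  have "t (max n M) < \<epsilon>"
    using M[of "max n M"] by simp
  then show ?thesis
    using that[of "max n M"] by simp
qed

lemma convex_seq_simplex: "convex seq_simplex"
  unfolding convex_def
proof (intro ballI allI impI)
  fix t t' :: "nat \<Rightarrow> real" and a b :: real
  assume t: "t \<in> seq_simplex" "t' \<in> seq_simplex" and ab: "0 \<le> a" "0 \<le> b" "a + b = 1"
  have "(\<Sum>n<M. (a *\<^sub>R t + b *\<^sub>R t') n) \<le> 1" for M
  proof -
    have "(\<Sum>n<M. (a *\<^sub>R t + b *\<^sub>R t') n) = a * (\<Sum>n<M. t n) + b * (\<Sum>n<M. t' n)"
      by (simp add: sum.distrib sum_distrib_left)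
    also have "\<dots> \<le> a * 1 + b * 1"
      using t ab by (intro add_mono mult_left_mono) (auto simp: seq_simplex_def)
    finally show ?thesis
      using ab by simp
  qed
  then show "a *\<^sub>R t + b *\<^sub>R t' \<in> seq_simplex"
    using t ab by (auto simp: seq_simplex_def)
qed

lemma compact_seq_simplex: "compact seq_simplex"
proof -
  have "compact (PiE UNIV (\<lambda>_::nat. {0..1::real}))"
    using compactin_PiE[of "\<lambda>_. euclidean" UNIV "\<lambda>_::nat. {0..1::real}"]
    by (simp add: euclidean_product_topology)
  moreover have "closed seq_simplex"
  proof -
    have "seq_simplex = (\<Inter>n. {t. 0 \<le> t n}) \<inter> (\<Inter>M. {t. (\<Sum>n<M. t n) \<le> 1})"
      by (auto simp: seq_simplex_def)
    also have "closed \<dots>"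
      by (intro closed_Int closed_INT ballI closed_Collect_le) (simp_all add: continuous_on_sum)
    finally show ?thesis .
  qed
  ultimately have "compact (PiE UNIV (\<lambda>_. {0..1}) \<inter> seq_simplex)"
    by (rule compact_Int_closed)
  moreover have "PiE UNIV (\<lambda>_. {0..1}) \<inter> seq_simplex = seq_simplex"
    by (auto simp: seq_simplex_nonneg seq_simplex_le_1)
  ultimately show ?thesis
    by simp
qed

definition unit_seq :: "nat \<Rightarrow> nat \<Rightarrow> real" where
  "unit_seq n = (\<lambda>k. if k = n then 1 else 0)"

lemma scaleR_unit_seq_in_seq_simplex:
  assumes "0 \<le> c" "c \<le> 1"
  shows "c *\<^sub>R unit_seq n \<in> seq_simplex"
proof -
  have eq: "c *\<^sub>R unit_seq n = (\<lambda>k. if k = n then c else 0)"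
    by (simp add: unit_seq_def fun_eq_iff)
  have "(\<Sum>k<M. if k = n then c else 0) \<le> 1" for M
    using assms by simp
  then show ?thesis
    using assms unfolding eq by (simp add: seq_simplex_def)
qed

lemma unit_seq_in_seq_simplex: "unit_seq n \<in> seq_simplex"
  using scaleR_unit_seq_in_seq_simplex[of 1 n] by simp

lemma seq_simplex_series_tail:
  fixes b :: "nat \<Rightarrow> real"
  assumes t: "t \<in> seq_simplex" and b: "\<And>n. M \<le> n \<Longrightarrow> \<bar>b n\<bar> \<le> B"
  shows "summable (\<lambda>n. t n * b n)"
    and "\<bar>(\<Sum>n. t n * b n) - (\<Sum>n<M. t n * b n)\<bar> \<le> B * (\<Sum>n. t (n + M))"
proof -
  have bound: "\<bar>t n * b n\<bar> \<le> B * t n" if "M \<le> n" for n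
  proof -
    have "\<bar>t n * b n\<bar> = t n * \<bar>b n\<bar>"
      using seq_simplex_nonneg[OF t, of n] by (simp add: abs_mult)
    also have "\<dots> \<le> t n * B"
      using b[OF that] seq_simplex_nonneg[OF t, of n] by (rule mult_left_mono)
    finally show ?thesis
      by (simp add: mult.commute)
  qed
  have summable_t: "summable t"
    by (rule seq_simplex_summable[OF t])
  show summable: "summable (\<lambda>n. t n * b n)"
    using bound by (intro summable_comparison_test'[where N = M, OF summable_mult[OF summable_t]]) simp
  have "(\<Sum>n. t n * b n) - (\<Sum>n<M. t n * b n) = (\<Sum>n. t (n + M) * b (n + M))"
    by (rule suminf_minus_initial_segment[OF summable, symmetric])
  also have "\<bar>\<dots>\<bar> \<le> (\<Sum>n. B * t (n + M))"
    using bound summable_mult[OF summable_ignore_initial_segment[OF summable_t], of B]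
    by (fold real_norm_def, intro norm_suminf_le) simp_all
  also have "\<dots> = B * (\<Sum>n. t (n + M))"
    by (rule suminf_mult[OF summable_ignore_initial_segment[OF summable_t]])
  finally show "\<bar>(\<Sum>n. t n * b n) - (\<Sum>n<M. t n * b n)\<bar> \<le> B * (\<Sum>n. t (n + M))" .
qed

lemma continuous_on_seq_simplex_series:
  fixes a :: "nat \<Rightarrow> real"
  assumes "a \<longlonglongrightarrow> 0"
  shows "continuous_on seq_simplex (\<lambda>t. \<Sum>n. t n * a n)"
proof (rule uniform_limit_theorem)
  show "\<forall>\<^sub>F M in sequentially. continuous_on seq_simplex (\<lambda>t. \<Sum>n<M. t n * a n)"
    by (intro always_eventually allI continuous_intros continuous_on_subset[OF continuous_on_product_coordinates]) simp
  show "uniform_limit seq_simplex (\<lambda>M t. \<Sum>n<M. t n * a n) (\<lambda>t. \<Sum>n. t n * a n) sequentially"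
    unfolding uniform_limit_iff
  proof (intro allI impI)
    fix e :: real assume "0 < e"
    with LIMSEQ_D[OF assms, of "e / 2"] obtain M0 where M0: "\<And>n. M0 \<le> n \<Longrightarrow> \<bar>a n\<bar> < e / 2"
      by auto
    have "dist (\<Sum>n<M. t n * a n) (\<Sum>n. t n * a n) < e" if "M0 \<le> M" "t \<in> seq_simplex" for M t
    proof -
      have "dist (\<Sum>n<M. t n * a n) (\<Sum>n. t n * a n) \<le> e / 2 * (\<Sum>n. t (n + M))"
        using seq_simplex_series_tail(2)[OF \<open>t \<in> seq_simplex\<close>, of M a "e / 2"] M0 that(1)
        by (simp add: dist_real_def abs_minus_commute less_imp_le)
      also have "\<dots> \<le> e / 2"
        using seq_simplex_tail_le_1[OF \<open>t \<in> seq_simplex\<close>, of M] \<open>0 < e\<close> by simp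
      finally show ?thesis
        using \<open>0 < e\<close> by simp
    qed
    then show "\<forall>\<^sub>F M in sequentially. \<forall>t\<in>seq_simplex. dist (\<Sum>n<M. t n * a n) (\<Sum>n. t n * a n) < e"
      unfolding eventually_sequentially by blast
  qed
qed simp

section \<open>Weak compactness of images of the simplex\<close>

lemma compactin_weak_topology_image:
  assumes "compactin X S" "g ` S \<subseteq> V"
    and "\<And>\<phi>. \<phi> \<in> bdd_lin_functionals V N \<Longrightarrow>
           continuous_map (subtopology X S) euclideanreal (\<lambda>x. \<phi> (g x))"
  shows "compactin (weak_topology V N) (g ` S)"
proof -
  let ?B = "bdd_lin_functionals V N"
  have "continuous_map (subtopology X S) (weak_topology V N) g"
    unfolding weak_topology_def
  proof (rule continuous_map_pullback')
    show "continuous_map (subtopology X S) (product_topology (\<lambda>_. euclideanreal) ?B)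
            ((\<lambda>x. restrict (\<lambda>f. f x) ?B) \<circ> g)"
      unfolding continuous_map_componentwise
    proof
      show "((\<lambda>x. restrict (\<lambda>f. f x) ?B) \<circ> g) ` topspace (subtopology X S) \<subseteq> extensional ?B"
        by auto
      show "\<forall>\<phi>\<in>?B. continuous_map (subtopology X S) euclideanreal
              (\<lambda>x. ((\<lambda>x. restrict (\<lambda>f. f x) ?B) \<circ> g) x \<phi>)"
        using assms(3) by simp
    qed
    show "topspace (subtopology X S) \<subseteq> g -` V"
      using assms(2) by auto
  qed
  moreover have "compactin (subtopology X S) S"
    using assms(1) by (simp add: compactin_subtopology)
  ultimately show ?thesis
    by (metis image_compactin)
qed

lemma bdd_lin_functional_scaleR:
  "\<phi> \<in> bdd_lin_functionals V N \<Longrightarrow> x \<in> V \<Longrightarrow> \<phi> (r *\<^sub>R x) = r * \<phi> x"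
  unfolding bdd_lin_functionals_def by blast

lemma bdd_lin_functional_zero:
  assumes "\<phi> \<in> bdd_lin_functionals V N" "subspace V"
  shows "\<phi> 0 = 0"
  using bdd_lin_functional_scaleR[OF assms(1) subspace_0[OF assms(2)], of 0] by simp

lemma bdd_lin_functional_diff:
  assumes "\<phi> \<in> bdd_lin_functionals V N" "subspace V" "x \<in> V" "y \<in> V"
  shows "\<phi> (x - y) = \<phi> x - \<phi> y"
proof -
  have "(-1) *\<^sub>R y \<in> V"
    using subspace_scale[OF assms(2,4)] .
  then have "\<phi> (x + (-1) *\<^sub>R y) = \<phi> x + \<phi> ((-1) *\<^sub>R y)"
    using assms(1,3) unfolding bdd_lin_functionals_def by blast
  then show ?thesis
    using bdd_lin_functional_scaleR[OF assms(1,4), of "-1"] by simp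
qed

lemma bdd_lin_functional_sum:
  assumes "\<phi> \<in> bdd_lin_functionals V N" "subspace V" "\<And>k. k \<in> F \<Longrightarrow> w k \<in> V"
  shows "\<phi> (\<Sum>k\<in>F. w k) = (\<Sum>k\<in>F. \<phi> (w k))"
  using assms(3)
proof (induction F rule: infinite_finite_induct)
  case (insert k F)
  then have "(\<Sum>k\<in>F. w k) \<in> V"
    using subspace_sum[OF assms(2)] by blast
  with insert assms(1) show ?case
    unfolding bdd_lin_functionals_def by simp
qed (simp_all add: bdd_lin_functional_zero[OF assms(1,2)])

lemma bdd_lin_functional_bound:
  assumes "\<phi> \<in> bdd_lin_functionals V N" "\<And>x. x \<in> V \<Longrightarrow> 0 \<le> N x"
  obtains C where "0 \<le> C" "\<And>x. x \<in> V \<Longrightarrow> \<bar>\<phi> x\<bar> \<le> C * N x"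
proof -
  obtain C where C: "\<And>x. x \<in> V \<Longrightarrow> \<bar>\<phi> x\<bar> \<le> C * N x"
    using assms(1) unfolding bdd_lin_functionals_def by blast
  have "\<bar>\<phi> x\<bar> \<le> max C 0 * N x" if "x \<in> V" for x
    using C[OF that] mult_right_mono[OF max.cobounded1 assms(2)[OF that], of C 0] by linarith
  then show ?thesis
    using that[of "max C 0"] by simp
qed

lemma infinite_same_sign_if_not_tendsto_zero:
  fixes a :: "nat \<Rightarrow> real"
  assumes "\<not> a \<longlonglongrightarrow> 0"
  obtains \<epsilon> \<sigma> where "0 < \<epsilon>" "\<bar>\<sigma>\<bar> = 1" "infinite {n. \<epsilon> \<le> \<sigma> * a n}"
proof -
  obtain \<epsilon> where "0 < \<epsilon>" and frequent: "\<forall>M. \<exists>n\<ge>M. \<epsilon> \<le> \<bar>a n\<bar>"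
    using assms unfolding LIMSEQ_iff by (auto simp: not_less)
  have "infinite {n. \<epsilon> \<le> \<bar>a n\<bar>}"
    using frequent unfolding infinite_nat_iff_unbounded_le by auto
  moreover have "{n. \<epsilon> \<le> \<bar>a n\<bar>} = {n. \<epsilon> \<le> 1 * a n} \<union> {n. \<epsilon> \<le> (-1) * a n}"
    by auto
  ultimately have "infinite {n. \<epsilon> \<le> 1 * a n} \<or> infinite {n. \<epsilon> \<le> (-1) * a n}"
    by simp
  then show ?thesis
    using that[OF \<open>0 < \<epsilon>\<close>, of 1] that[OF \<open>0 < \<epsilon>\<close>, of "-1"] by auto
qed

lemma linear_le_sqrt_imp_le_square:
  fixes C \<epsilon> :: real
  assumes "0 < \<epsilon>" "0 < m" "real m * \<epsilon> \<le> C * sqrt (real m)"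
  shows "real m \<le> (C / \<epsilon>)\<^sup>2"
proof -
  have "sqrt (real m) * (sqrt (real m) * \<epsilon>) \<le> sqrt (real m) * C"
    using assms(3) by (simp add: algebra_simps flip: power2_eq_square)
  then have "sqrt (real m) \<le> C / \<epsilon>"
    using assms(1,2) by (simp add: pos_le_divide_eq)
  then have "(sqrt (real m))\<^sup>2 \<le> (C / \<epsilon>)\<^sup>2"
    by (rule power_mono) simp
  then show ?thesis
    by simp
qed

text \<open>
  If \<open>\<bar>\<phi> (v n)\<bar> \<ge> \<epsilon>\<close> for infinitely many \<open>n\<close>, then \<open>m\<close> of them with a common sign give
  \<open>m \<epsilon> \<le> \<bar>\<phi> (\<Sum>k\<in>F. v k)\<bar> \<le> C c \<surd>m\<close>, which fails for large \<open>m\<close>.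
\<close>
lemma bdd_lin_functional_tendsto_zero:
  assumes \<phi>: "\<phi> \<in> bdd_lin_functionals V N" and V: "subspace V"
    and N_nonneg: "\<And>x. x \<in> V \<Longrightarrow> 0 \<le> N x"
    and v: "\<And>n. v n \<in> V"
    and growth: "\<And>F. finite F \<Longrightarrow> N (\<Sum>k\<in>F. v k) \<le> c * sqrt (card F)"
  shows "(\<lambda>n. \<phi> (v n)) \<longlonglongrightarrow> 0"
proof (rule ccontr)
  obtain C where "0 \<le> C" and C: "\<And>x. x \<in> V \<Longrightarrow> \<bar>\<phi> x\<bar> \<le> C * N x"
    using bdd_lin_functional_bound[OF \<phi> N_nonneg] by blast
  assume "\<not> (\<lambda>n. \<phi> (v n)) \<longlonglongrightarrow> 0"
  then obtain \<epsilon> \<sigma> where "0 < \<epsilon>" "\<bar>\<sigma>\<bar> = 1" and inf: "infinite {n. \<epsilon> \<le> \<sigma> * \<phi> (v n)}"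
    by (rule infinite_same_sign_if_not_tendsto_zero)
  define m where "m = nat \<lceil>(C * \<bar>c\<bar> / \<epsilon>)\<^sup>2\<rceil> + 1"
  obtain F where F: "F \<subseteq> {n. \<epsilon> \<le> \<sigma> * \<phi> (v n)}" "finite F" "card F = m"
    using infinite_arbitrarily_large[OF inf] by blast
  have "\<phi> (\<Sum>k\<in>F. v k) = (\<Sum>k\<in>F. \<phi> (v k))"
    by (rule bdd_lin_functional_sum[OF \<phi> V]) (rule v)
  have "real m * \<epsilon> \<le> (\<Sum>k\<in>F. \<sigma> * \<phi> (v k))"
    using sum_bounded_below[of F \<epsilon> "\<lambda>k. \<sigma> * \<phi> (v k)"] F by auto
  also have "\<dots> = \<sigma> * \<phi> (\<Sum>k\<in>F. v k)"
    using \<open>\<phi> (\<Sum>k\<in>F. v k) = (\<Sum>k\<in>F. \<phi> (v k))\<close> by (simp add: sum_distrib_left)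
  also have "\<dots> \<le> \<bar>\<phi> (\<Sum>k\<in>F. v k)\<bar>"
    using abs_ge_self[of "\<sigma> * \<phi> (\<Sum>k\<in>F. v k)"] \<open>\<bar>\<sigma>\<bar> = 1\<close> by (simp add: abs_mult)
  also have "\<dots> \<le> C * N (\<Sum>k\<in>F. v k)"
    by (rule C, rule subspace_sum[OF V], rule v)
  also have "\<dots> \<le> C * (\<bar>c\<bar> * sqrt (real m))"
    using growth[OF F(2)] F(3) mult_right_mono[OF abs_ge_self, of "sqrt (real m)" c]
    by (intro mult_left_mono[OF _ \<open>0 \<le> C\<close>]) simp_all
  finally have "real m \<le> (C * \<bar>c\<bar> / \<epsilon>)\<^sup>2"
    using \<open>0 < \<epsilon>\<close> by (intro linear_le_sqrt_imp_le_square) (simp_all add: m_def mult.assoc)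
  then show False
    unfolding m_def by linarith
qed

lemma bdd_lin_functional_sums:
  assumes \<phi>: "\<phi> \<in> bdd_lin_functionals V N" and V: "subspace V"
    and N_nonneg: "\<And>x. x \<in> V \<Longrightarrow> 0 \<le> N x"
    and g_V: "\<And>t. t \<in> seq_simplex \<Longrightarrow> g t \<in> V"
    and partial_sums: "(\<lambda>M. N (g t - (\<Sum>n<M. t n *\<^sub>R g (unit_seq n)))) \<longlonglongrightarrow> 0"
    and t: "t \<in> seq_simplex"
  shows "(\<lambda>n. t n * \<phi> (g (unit_seq n))) sums \<phi> (g t)"
proof -
  obtain C where C: "\<And>x. x \<in> V \<Longrightarrow> \<bar>\<phi> x\<bar> \<le> C * N x"
    using bdd_lin_functional_bound[OF \<phi> N_nonneg] by blast
  define p where "p M = (\<Sum>n<M. t n *\<^sub>R g (unit_seq n))" for M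
  have unit_V: "g (unit_seq n) \<in> V" for n
    by (rule g_V[OF unit_seq_in_seq_simplex])
  have p_V: "p M \<in> V" for M
    unfolding p_def by (intro subspace_sum[OF V] subspace_scale[OF V] unit_V)
  have "(\<lambda>M. \<phi> (g t) - \<phi> (p M)) \<longlonglongrightarrow> 0"
  proof (rule Lim_null_comparison)
    show "\<forall>\<^sub>F M in sequentially. norm (\<phi> (g t) - \<phi> (p M)) \<le> C * N (g t - p M)"
    proof (intro always_eventually allI)
      fix M
      have "\<bar>\<phi> (g t - p M)\<bar> \<le> C * N (g t - p M)"
        using C subspace_diff[OF V g_V[OF t] p_V] by blast
      then show "norm (\<phi> (g t) - \<phi> (p M)) \<le> C * N (g t - p M)"
        using bdd_lin_functional_diff[OF \<phi> V g_V[OF t] p_V] by simp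
    qed
    show "(\<lambda>M. C * N (g t - p M)) \<longlonglongrightarrow> 0"
      using tendsto_mult_right_zero[OF partial_sums, of C] by (simp add: p_def)
  qed
  from tendsto_diff[OF tendsto_const this, of "\<phi> (g t)"]
  have "(\<lambda>M. \<phi> (p M)) \<longlonglongrightarrow> \<phi> (g t)"
    by simp
  moreover have "\<phi> (p M) = (\<Sum>n<M. t n * \<phi> (g (unit_seq n)))" for M
    unfolding p_def
    by (simp add: bdd_lin_functional_sum[OF \<phi> V] subspace_scale[OF V unit_V]
        bdd_lin_functional_scaleR[OF \<phi> unit_V])
  ultimately show ?thesis
    by (simp add: sums_def)
qed

lemma compactin_weak_topology_seq_simplex_image:
  assumes V: "subspace V" and N_nonneg: "\<And>x. x \<in> V \<Longrightarrow> 0 \<le> N x"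
    and g_V: "\<And>t. t \<in> seq_simplex \<Longrightarrow> g t \<in> V"
    and partial_sums:
      "\<And>t. t \<in> seq_simplex \<Longrightarrow> (\<lambda>M. N (g t - (\<Sum>n<M. t n *\<^sub>R g (unit_seq n)))) \<longlonglongrightarrow> 0"
    and growth: "\<And>F. finite F \<Longrightarrow> N (\<Sum>k\<in>F. g (unit_seq k)) \<le> c * sqrt (card F)"
  shows "compactin (weak_topology V N) (g ` seq_simplex)"
proof (rule compactin_weak_topology_image)
  show "compactin euclidean seq_simplex"
    using compact_seq_simplex by simp
  show "g ` seq_simplex \<subseteq> V"
    using g_V by blast
  fix \<phi> assume \<phi>: "\<phi> \<in> bdd_lin_functionals V N"
  have "(\<lambda>n. \<phi> (g (unit_seq n))) \<longlonglongrightarrow> 0"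
    using bdd_lin_functional_tendsto_zero[OF \<phi> V N_nonneg g_V[OF unit_seq_in_seq_simplex] growth] .
  then have "continuous_on seq_simplex (\<lambda>t. \<Sum>n. t n * \<phi> (g (unit_seq n)))"
    by (rule continuous_on_seq_simplex_series)
  moreover have "(\<Sum>n. t n * \<phi> (g (unit_seq n))) = \<phi> (g t)" if t: "t \<in> seq_simplex" for t
    using bdd_lin_functional_sums[OF \<phi> V N_nonneg g_V partial_sums[OF t] t] by (simp add: sums_iff)
  ultimately have "continuous_on seq_simplex (\<lambda>t. \<phi> (g t))"
    by (rule continuous_on_eq)
  then show "continuous_map (subtopology euclidean seq_simplex) euclideanreal (\<lambda>t. \<phi> (g t))"
    by simp
qed

lemma convex_image_affine:
  assumes "convex S"
    and "\<And>x y a. x \<in> S \<Longrightarrow> y \<in> S \<Longrightarrow> 0 \<le> a \<Longrightarrow> a \<le> 1 \<Longrightarrow>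
      g (a *\<^sub>R x + (1 - a) *\<^sub>R y) = a *\<^sub>R g x + (1 - a) *\<^sub>R g y"
  shows "convex (g ` S)"
  unfolding convex_alt
proof (intro ballI allI impI)
  fix x y and a :: real
  assume "x \<in> g ` S" "y \<in> g ` S" and a: "0 \<le> a \<and> a \<le> 1"
  then obtain x' y' where x'y': "x' \<in> S" "y' \<in> S" and "x = g x'" "y = g y'"
    by blast
  then have "(1 - a) *\<^sub>R x + a *\<^sub>R y = g ((1 - a) *\<^sub>R x' + (1 - (1 - a)) *\<^sub>R y')"
    using assms(2)[OF x'y', of "1 - a"] a by simp
  moreover have "(1 - a) *\<^sub>R x' + (1 - (1 - a)) *\<^sub>R y' \<in> S"
    using assms(1) x'y' a unfolding convex_alt by simp
  ultimately show "(1 - a) *\<^sub>R x + a *\<^sub>R y \<in> g ` S"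
    by blast
qed

lemma has_fpf_orbitally_kannan_example_from_seq_simplex:
  fixes g :: "(nat \<Rightarrow> real) \<Rightarrow> 'a::real_vector"
  assumes V: "subspace V" and N_nonneg: "\<And>x. x \<in> V \<Longrightarrow> 0 \<le> N x" and N_zero: "N 0 = 0"
    and g_V: "\<And>t. t \<in> seq_simplex \<Longrightarrow> g t \<in> V"
    and g_affine: "\<And>t t' a. t \<in> seq_simplex \<Longrightarrow> t' \<in> seq_simplex \<Longrightarrow> 0 \<le> a \<Longrightarrow> a \<le> 1 \<Longrightarrow>
      g (a *\<^sub>R t + (1 - a) *\<^sub>R t') = a *\<^sub>R g t + (1 - a) *\<^sub>R g t'"
    and partial_sums:
      "\<And>t. t \<in> seq_simplex \<Longrightarrow> (\<lambda>M. N (g t - (\<Sum>n<M. t n *\<^sub>R g (unit_seq n)))) \<longlonglongrightarrow> 0"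
    and growth: "\<And>F. finite F \<Longrightarrow> N (\<Sum>k\<in>F. g (unit_seq k)) \<le> c * sqrt (card F)"
    and unit_dist: "\<And>i j. i \<noteq> j \<Longrightarrow> N (g (unit_seq i) - g (unit_seq j)) = 1"
    and bounded: "\<And>t. t \<in> seq_simplex \<Longrightarrow> \<exists>B. \<forall>m. N (g t - g (unit_seq m)) \<le> B"
    and far: "\<And>t \<epsilon> n. t \<in> seq_simplex \<Longrightarrow> 0 < \<epsilon> \<Longrightarrow> \<exists>m\<ge>n. 1 - \<epsilon> < N (g t - g (unit_seq m))"
    and s: "s \<in> seq_simplex" "0 < N (g s - g (unit_seq 0))" "N (g s - g (unit_seq 0)) < 1"
  shows "has_fpf_orbitally_kannan_example V N"
proof (rule has_fpf_orbitally_kannan_example_from_sequence)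
  show "g ` seq_simplex \<subseteq> V"
    using g_V by blast
  show "convex (g ` seq_simplex)"
    by (rule convex_image_affine[OF convex_seq_simplex]) (rule g_affine)
  show "compactin (weak_topology V N) (g ` seq_simplex)"
    by (rule compactin_weak_topology_seq_simplex_image[OF V N_nonneg g_V partial_sums growth])
  show "range (\<lambda>n. g (unit_seq n)) \<subseteq> g ` seq_simplex"
    using unit_seq_in_seq_simplex by blast
  show "g s \<in> g ` seq_simplex"
    using s(1) by blast
  show "\<exists>B. \<forall>m. N (x - g (unit_seq m)) \<le> B" if "x \<in> g ` seq_simplex" for x
    using that bounded by blast
  show "\<exists>m\<ge>n. 1 - \<epsilon> < N (x - g (unit_seq m))" if "x \<in> g ` seq_simplex" "0 < \<epsilon>" for x \<epsilon> n
    using that far by blast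
qed (fact N_zero unit_dist s(2,3))+

section \<open>The sequence spaces \<open>c\<^sub>0\<close> and \<open>\<ell>\<^sup>2\<close>\<close>

lemma sum_fun_apply: "(\<Sum>k\<in>F. f k) x = (\<Sum>k\<in>F. f k x)"
  by (induction F rule: infinite_finite_induct) simp_all

lemma minus_partial_sum_unit_seq: "t - (\<Sum>n<M. t n *\<^sub>R unit_seq n) = (\<lambda>k. if k < M then 0 else t k)"
  by (simp add: fun_eq_iff sum_fun_apply unit_seq_def if_distrib[of "(*) _"] cong: if_cong)

lemma sum_unit_seq: "finite F \<Longrightarrow> (\<Sum>k\<in>F. unit_seq k) = (\<lambda>n. if n \<in> F then 1 else 0)"
  by (simp add: fun_eq_iff sum_fun_apply unit_seq_def)

lemma unit_seq_sums: "unit_seq n sums 1"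
  using sums_single[of n "\<lambda>_. 1::real"] by (simp add: unit_seq_def)

lemma seq_simplex_tail_sums:
  assumes "t \<in> seq_simplex"
  shows "(\<lambda>k. if k < M then 0 else t k) sums (\<Sum>n. t (n + M))"
proof -
  have "(\<lambda>n. t (n + M)) sums (\<Sum>n. t (n + M))"
    using summable_ignore_initial_segment[OF seq_simplex_summable[OF assms]] by (rule summable_sums)
  then show ?thesis
    using sums_zero_iff_shift[of M "\<lambda>k. if k < M then 0 else t k"] by simp
qed

lemma sup_norm_seq_le: "(\<And>n. \<bar>x n\<bar> \<le> B) \<Longrightarrow> sup_norm_seq x \<le> B"
  unfolding sup_norm_seq_def by (rule cSup_least) auto

lemma abs_le_sup_norm_seq: "(\<And>n. \<bar>x n\<bar> \<le> B) \<Longrightarrow> \<bar>x k\<bar> \<le> sup_norm_seq x"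
  unfolding sup_norm_seq_def by (intro cSup_upper bdd_aboveI2[where M = B]) auto

lemma sup_norm_seq_eqI:
  assumes "\<And>n. \<bar>x n\<bar> \<le> B" "\<bar>x k\<bar> = B"
  shows "sup_norm_seq x = B"
proof -
  have "sup_norm_seq x \<le> B" "\<bar>x k\<bar> \<le> sup_norm_seq x"
    by (rule sup_norm_seq_le abs_le_sup_norm_seq, rule assms(1))+
  then show ?thesis
    using assms(2) by linarith
qed

lemma sup_norm_seq_nonneg:
  assumes "\<And>n. \<bar>x n\<bar> \<le> B"
  shows "0 \<le> sup_norm_seq x"
proof -
  have "\<bar>x 0\<bar> \<le> sup_norm_seq x"
    by (rule abs_le_sup_norm_seq) (rule assms)
  then show ?thesis
    by linarith
qed

lemma sup_norm_seq_zero: "sup_norm_seq 0 = 0"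
  by (rule sup_norm_seq_eqI) simp_all

lemma sup_norm_seq_partial_sums:
  assumes t: "t \<in> seq_simplex"
  shows "(\<lambda>M. sup_norm_seq (t - (\<Sum>n<M. t n *\<^sub>R unit_seq n))) \<longlonglongrightarrow> 0"
proof (rule tendsto_sandwich[OF _ _ tendsto_const seq_simplex_tail_tendsto_zero[OF t]])
  have bound: "\<bar>(t - (\<Sum>n<M. t n *\<^sub>R unit_seq n)) k\<bar> \<le> (\<Sum>n. t (n + M))" for M k
    using seq_simplex_nonneg[OF t] seq_simplex_le_tail[OF t] seq_simplex_tail_nonneg[OF t]
    by (simp add: minus_partial_sum_unit_seq)
  show "\<forall>\<^sub>F M in sequentially. 0 \<le> sup_norm_seq (t - (\<Sum>n<M. t n *\<^sub>R unit_seq n))"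
    by (intro always_eventually allI sup_norm_seq_nonneg) (rule bound)
  show "\<forall>\<^sub>F M in sequentially. sup_norm_seq (t - (\<Sum>n<M. t n *\<^sub>R unit_seq n)) \<le> (\<Sum>n. t (n + M))"
    by (intro always_eventually allI sup_norm_seq_le) (rule bound)
qed

lemma abs_diff_unit_seq_le_1: "t \<in> seq_simplex \<Longrightarrow> \<bar>(t - unit_seq m) k\<bar> \<le> 1"
  using seq_simplex_nonneg[of t k] seq_simplex_le_1[of t k] by (cases "k = m") (simp_all add: unit_seq_def)

lemma sup_norm_seq_diff_unit_seq_le: "t \<in> seq_simplex \<Longrightarrow> sup_norm_seq (t - unit_seq m) \<le> 1"
  by (rule sup_norm_seq_le) (rule abs_diff_unit_seq_le_1)

lemma sup_norm_seq_diff_unit_seq_ge: "t \<in> seq_simplex \<Longrightarrow> 1 - t m \<le> sup_norm_seq (t - unit_seq m)"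
  using abs_le_sup_norm_seq[of "t - unit_seq m" 1 m] abs_diff_unit_seq_le_1[of t m]
  by (simp add: unit_seq_def)

lemma sup_norm_seq_unit_seq_diff: "i \<noteq> j \<Longrightarrow> sup_norm_seq (unit_seq i - unit_seq j) = 1"
  by (rule sup_norm_seq_eqI[where k = i]) (simp_all add: unit_seq_def)

lemma sup_norm_seq_half_unit_seq_diff: "sup_norm_seq ((1/2) *\<^sub>R unit_seq 0 - unit_seq 0) = 1/2"
  by (rule sup_norm_seq_eqI[where k = 0]) (simp_all add: unit_seq_def)

lemma one_le_sqrt_card: "finite F \<Longrightarrow> F \<noteq> {} \<Longrightarrow> 1 \<le> sqrt (card F)"
  by (simp add: Suc_le_eq card_gt_0_iff)

lemma sup_norm_seq_sum_unit_seq_le: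
  assumes "finite F"
  shows "sup_norm_seq (\<Sum>k\<in>F. unit_seq k) \<le> sqrt (card F)"
proof (cases "F = {}")
  case False
  have "sup_norm_seq (\<Sum>k\<in>F. unit_seq k) \<le> 1"
    by (rule sup_norm_seq_le) (simp add: sum_unit_seq[OF assms])
  then show ?thesis
    using one_le_sqrt_card[OF assms False] by linarith
qed (simp add: sup_norm_seq_zero)

lemma exists_sup_norm_seq_diff_unit_seq_gt:
  assumes t: "t \<in> seq_simplex" and "0 < \<epsilon>"
  shows "\<exists>m\<ge>n. 1 - \<epsilon> < sup_norm_seq (t - unit_seq m)"
proof -
  obtain m where "n \<le> m" "t m < \<epsilon>"
    using seq_simplex_exists_small[OF assms] .
  then show ?thesis
    using sup_norm_seq_diff_unit_seq_ge[OF t, of m] by (intro exI[of _ m]) simp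
qed

lemma subspace_c0: "subspace c0"
  unfolding subspace_def c0_def
proof (intro conjI ballI allI)
  fix x y :: "nat \<Rightarrow> real" and r :: real
  assume x: "x \<in> {x. x \<longlonglongrightarrow> 0}" and y: "y \<in> {x. x \<longlonglongrightarrow> 0}"
  show "x + y \<in> {x. x \<longlonglongrightarrow> 0}"
    using tendsto_add_zero[of x sequentially y] x y by (simp add: plus_fun_def)
  show "r *\<^sub>R x \<in> {x. x \<longlonglongrightarrow> 0}"
    using tendsto_mult_right_zero[of x sequentially r] x by (simp add: scaleR_fun_def)
qed (simp add: zero_fun_def)

lemma seq_simplex_in_c0: "t \<in> seq_simplex \<Longrightarrow> t \<in> c0"
  unfolding c0_def by (simp add: seq_simplex_tendsto_zero)

lemma sup_norm_seq_nonneg_c0: "x \<in> c0 \<Longrightarrow> 0 \<le> sup_norm_seq x"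
proof -
  assume "x \<in> c0"
  then obtain B where "\<And>n. \<bar>x n\<bar> \<le> B"
    unfolding c0_def using convergent_imp_Bseq[of x] by (auto simp: convergent_def Bseq_def)
  then show ?thesis
    by (rule sup_norm_seq_nonneg)
qed

lemma c0_example: "has_fpf_orbitally_kannan_example c0 sup_norm_seq"
proof (rule has_fpf_orbitally_kannan_example_from_seq_simplex
    [where g = id and c = 1 and s = "(1/2) *\<^sub>R unit_seq 0"])
  show "\<exists>B. \<forall>m. sup_norm_seq (id t - id (unit_seq m)) \<le> B" if "t \<in> seq_simplex" for t
    using sup_norm_seq_diff_unit_seq_le[OF that] by auto
qed (simp_all add: subspace_c0 sup_norm_seq_nonneg_c0 sup_norm_seq_zero seq_simplex_in_c0
    sup_norm_seq_partial_sums sup_norm_seq_sum_unit_seq_le exists_sup_norm_seq_diff_unit_seq_gt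
    sup_norm_seq_unit_seq_diff sup_norm_seq_half_unit_seq_diff scaleR_unit_seq_in_seq_simplex)

lemma l2_norm_seq_sums: "(\<lambda>n. (x n)\<^sup>2) sums S \<Longrightarrow> l2_norm_seq x = sqrt S"
  unfolding l2_norm_seq_def by (simp add: sums_unique[symmetric])

lemma norm_l2_new_le:
  assumes "\<And>k. \<bar>y k\<bar> \<le> A" "\<And>k. (y k)\<^sup>2 \<le> z k" "summable z"
  shows "norm_l2_new y \<le> max A (sqrt (\<Sum>k. z k) / sqrt 2)"
proof -
  have "summable (\<lambda>k. (y k)\<^sup>2)"
    by (rule summable_comparison_test'[OF assms(3)]) (simp add: assms(2))
  then have "(\<Sum>k. (y k)\<^sup>2) \<le> (\<Sum>k. z k)"
    by (rule suminf_le[OF assms(2) _ assms(3)])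
  then have "l2_norm_seq y / sqrt 2 \<le> sqrt (\<Sum>k. z k) / sqrt 2"
    unfolding l2_norm_seq_def by (simp add: divide_right_mono)
  moreover have "sup_norm_seq y \<le> A"
    by (rule sup_norm_seq_le) (rule assms(1))
  ultimately show ?thesis
    unfolding norm_l2_new_def by (rule max.mono[rotated])
qed

lemma sup_norm_seq_le_norm_l2_new: "sup_norm_seq y \<le> norm_l2_new y"
  by (simp add: norm_l2_new_def)

lemma norm_l2_new_eq_sup_norm_seq:
  assumes "l2_norm_seq y \<le> sqrt 2 * sup_norm_seq y"
  shows "norm_l2_new y = sup_norm_seq y"
proof -
  have "l2_norm_seq y \<le> sup_norm_seq y * sqrt 2"
    using assms by (simp only: mult.commute)
  then have "l2_norm_seq y / sqrt 2 \<le> sup_norm_seq y"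
    by (simp add: pos_divide_le_eq)
  then show ?thesis
    unfolding norm_l2_new_def by simp
qed

lemma subspace_l2: "subspace l2"
  unfolding subspace_def l2_def
proof (intro conjI ballI allI)
  fix x y :: "nat \<Rightarrow> real" and r :: real
  assume x: "x \<in> {x. summable (\<lambda>n. (x n)\<^sup>2)}" and y: "y \<in> {x. summable (\<lambda>n. (x n)\<^sup>2)}"
  have "(x n + y n)\<^sup>2 \<le> 2 * (x n)\<^sup>2 + 2 * (y n)\<^sup>2" for n
    using zero_le_power2[of "x n - y n"] by (simp add: power2_eq_square algebra_simps)
  moreover have "summable (\<lambda>n. 2 * (x n)\<^sup>2 + 2 * (y n)\<^sup>2)"
    using x y by (intro summable_add summable_mult) simp_all
  ultimately show "x + y \<in> {x. summable (\<lambda>n. (x n)\<^sup>2)}"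
    by (simp add: summable_comparison_test'[where N = 0])
  show "r *\<^sub>R x \<in> {x. summable (\<lambda>n. (x n)\<^sup>2)}"
    using x by (simp add: power_mult_distrib summable_mult)
qed simp

lemma norm_l2_new_nonneg:
  assumes "x \<in> l2"
  shows "0 \<le> norm_l2_new x"
proof -
  have "0 \<le> (\<Sum>n. (x n)\<^sup>2)"
    using assms unfolding l2_def by (intro suminf_nonneg) simp_all
  then have "0 \<le> l2_norm_seq x / sqrt 2"
    unfolding l2_norm_seq_def by simp
  then show ?thesis
    unfolding norm_l2_new_def by linarith
qed

lemma norm_l2_new_zero: "norm_l2_new 0 = 0"
proof -
  have "l2_norm_seq 0 = 0"
    using l2_norm_seq_sums[of 0 0] by simp
  then show ?thesis
    by (simp add: norm_l2_new_def sup_norm_seq_zero)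
qed

lemma seq_simplex_in_l2:
  assumes "t \<in> seq_simplex"
  shows "t \<in> l2"
proof -
  have "norm ((t n)\<^sup>2) \<le> t n" for n
    using seq_simplex_nonneg[OF assms, of n] seq_simplex_le_1[OF assms, of n]
    by (simp add: power2_eq_square mult_left_le)
  then have "summable (\<lambda>n. (t n)\<^sup>2)"
    by (rule summable_comparison_test'[OF seq_simplex_summable[OF assms]])
  then show ?thesis
    unfolding l2_def by simp
qed

lemma norm_l2_new_partial_sums:
  assumes t: "t \<in> seq_simplex"
  shows "(\<lambda>M. norm_l2_new (t - (\<Sum>n<M. t n *\<^sub>R unit_seq n))) \<longlonglongrightarrow> 0"
proof (rule tendsto_sandwich[OF _ _ tendsto_const])
  let ?y = "\<lambda>M k. if k < M then 0 else t k"
  have "norm_l2_new (?y M) \<le> max (\<Sum>n. t (n + M)) (sqrt (\<Sum>k. ?y M k) / sqrt 2)" for M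
  proof (rule norm_l2_new_le)
    show "\<bar>?y M k\<bar> \<le> (\<Sum>n. t (n + M))" for k
      using seq_simplex_nonneg[OF t] seq_simplex_le_tail[OF t] seq_simplex_tail_nonneg[OF t] by simp
    show "(?y M k)\<^sup>2 \<le> ?y M k" for k
      using seq_simplex_nonneg[OF t, of k] seq_simplex_le_1[OF t, of k]
      by (simp add: power2_eq_square mult_left_le)
    show "summable (?y M)"
      using seq_simplex_tail_sums[OF t] by (rule sums_summable)
  qed
  then show "\<forall>\<^sub>F M in sequentially. norm_l2_new (t - (\<Sum>n<M. t n *\<^sub>R unit_seq n))
      \<le> max (\<Sum>n. t (n + M)) (sqrt (\<Sum>n. t (n + M)) / sqrt 2)"
    by (simp add: minus_partial_sum_unit_seq sums_unique[OF seq_simplex_tail_sums[OF t], symmetric])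
  have "0 \<le> sup_norm_seq (?y M)" for M
    by (rule sup_norm_seq_nonneg[where B = 1]) (simp add: seq_simplex_nonneg[OF t] seq_simplex_le_1[OF t])
  then show "\<forall>\<^sub>F M in sequentially. 0 \<le> norm_l2_new (t - (\<Sum>n<M. t n *\<^sub>R unit_seq n))"
    unfolding minus_partial_sum_unit_seq
    by (intro always_eventually allI order_trans[OF _ sup_norm_seq_le_norm_l2_new])
  have "(\<lambda>M. sqrt (\<Sum>n. t (n + M))) \<longlonglongrightarrow> 0"
    using tendsto_real_sqrt[OF seq_simplex_tail_tendsto_zero[OF t]] by simp
  then show "(\<lambda>M. max (\<Sum>n. t (n + M)) (sqrt (\<Sum>n. t (n + M)) / sqrt 2)) \<longlonglongrightarrow> 0"
    using tendsto_max[OF seq_simplex_tail_tendsto_zero[OF t] tendsto_divide_zero] by simp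
qed

lemma norm_l2_new_sum_unit_seq_le:
  assumes "finite F"
  shows "norm_l2_new (\<Sum>k\<in>F. unit_seq k) \<le> sqrt (card F)"
proof (cases "F = {}")
  case False
  let ?y = "\<lambda>n. if n \<in> F then 1 else 0 :: real"
  have "?y sums real (card F)"
    using sums_If_finite_set[OF assms, of "\<lambda>_. 1::real"] by simp
  then have "norm_l2_new ?y \<le> max 1 (sqrt (card F) / sqrt 2)"
    using norm_l2_new_le[of ?y 1 ?y] by (simp add: sums_summable sums_unique[symmetric])
  also have "\<dots> \<le> sqrt (card F)"
    using one_le_sqrt_card[OF assms False] by (simp add: divide_le_eq)
  finally show ?thesis
    by (simp add: sum_unit_seq[OF assms])
qed (simp add: norm_l2_new_zero)

lemma norm_l2_new_diff_unit_seq_le: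
  assumes t: "t \<in> seq_simplex"
  shows "norm_l2_new (t - unit_seq m) \<le> max 1 (sqrt ((\<Sum>k. t k) + 1) / sqrt 2)"
proof -
  have sums: "(\<lambda>k. t k + unit_seq m k) sums ((\<Sum>k. t k) + 1)"
    using sums_add[OF summable_sums[OF seq_simplex_summable[OF t]] unit_seq_sums] .
  have square_le: "((t - unit_seq m) k)\<^sup>2 \<le> t k + unit_seq m k" for k
  proof -
    have "((t - unit_seq m) k)\<^sup>2 = \<bar>(t - unit_seq m) k\<bar> * \<bar>(t - unit_seq m) k\<bar>"
      by (simp add: power2_eq_square)
    also have "\<dots> \<le> \<bar>(t - unit_seq m) k\<bar> * 1"
      using abs_diff_unit_seq_le_1[OF t] by (rule mult_left_mono) simp
    also have "\<dots> \<le> t k + unit_seq m k"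
      using seq_simplex_nonneg[OF t, of k] seq_simplex_le_1[OF t, of k]
      by (cases "k = m") (simp_all add: unit_seq_def)
    finally show ?thesis .
  qed
  have "norm_l2_new (t - unit_seq m) \<le> max 1 (sqrt (\<Sum>k. t k + unit_seq m k) / sqrt 2)"
    by (rule norm_l2_new_le, rule abs_diff_unit_seq_le_1[OF t], rule square_le, rule sums_summable[OF sums])
  then show ?thesis
    by (simp add: sums_unique[OF sums, symmetric])
qed

lemma exists_norm_l2_new_diff_unit_seq_gt:
  assumes "t \<in> seq_simplex" "0 < \<epsilon>"
  shows "\<exists>m\<ge>n. 1 - \<epsilon> < norm_l2_new (t - unit_seq m)"
  using exists_sup_norm_seq_diff_unit_seq_gt[OF assms, of n] sup_norm_seq_le_norm_l2_new
  by (meson order_less_le_trans)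

lemma l2_norm_seq_unit_seq_diff: "i \<noteq> j \<Longrightarrow> l2_norm_seq (unit_seq i - unit_seq j) = sqrt 2"
proof (rule l2_norm_seq_sums)
  assume "i \<noteq> j"
  then have "(\<lambda>n. ((unit_seq i - unit_seq j) n)\<^sup>2) = (\<lambda>n. unit_seq i n + unit_seq j n)"
    by (simp add: fun_eq_iff unit_seq_def)
  then show "(\<lambda>n. ((unit_seq i - unit_seq j) n)\<^sup>2) sums 2"
    using sums_add[OF unit_seq_sums[of i] unit_seq_sums[of j]] by simp
qed

lemma l2_norm_seq_half_unit_seq_diff: "l2_norm_seq ((1/2) *\<^sub>R unit_seq 0 - unit_seq 0) = 1/2"
proof -
  have "(\<lambda>n. (((1/2) *\<^sub>R unit_seq 0 - unit_seq 0) n)\<^sup>2) = (\<lambda>n. 1/4 * unit_seq 0 n)"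
    by (simp add: fun_eq_iff unit_seq_def power2_eq_square)
  then have "(\<lambda>n. (((1/2) *\<^sub>R unit_seq 0 - unit_seq 0) n)\<^sup>2) sums (1/4)"
    using sums_mult[OF unit_seq_sums[of 0], of "1/4"] by simp
  then show ?thesis
    by (simp add: l2_norm_seq_sums real_sqrt_divide)
qed

lemma l2_example: "has_fpf_orbitally_kannan_example l2 norm_l2_new"
proof (rule has_fpf_orbitally_kannan_example_from_seq_simplex
    [where g = id and c = 1 and s = "(1/2) *\<^sub>R unit_seq 0"])
  show "\<exists>B. \<forall>m. norm_l2_new (id t - id (unit_seq m)) \<le> B" if "t \<in> seq_simplex" for t
    using norm_l2_new_diff_unit_seq_le[OF that] by auto
qed (simp_all add: subspace_l2 norm_l2_new_nonneg norm_l2_new_zero seq_simplex_in_l2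
    norm_l2_new_partial_sums norm_l2_new_sum_unit_seq_le exists_norm_l2_new_diff_unit_seq_gt
    norm_l2_new_eq_sup_norm_seq l2_norm_seq_unit_seq_diff sup_norm_seq_unit_seq_diff
    l2_norm_seq_half_unit_seq_diff sup_norm_seq_half_unit_seq_diff scaleR_unit_seq_in_seq_simplex)

section \<open>Series of uniformly bounded functions\<close>

definition synthesis :: "(nat \<Rightarrow> 'a \<Rightarrow> real) \<Rightarrow> (nat \<Rightarrow> real) \<Rightarrow> 'a \<Rightarrow> real" where
  "synthesis f t = (\<lambda>s. \<Sum>n. t n * f n s)"

lemma synthesis_scaleR_unit_seq: "synthesis f (c *\<^sub>R unit_seq n) = c *\<^sub>R f n"
proof -
  have "(\<lambda>k. (c *\<^sub>R unit_seq n) k * f k s) = (\<lambda>k. if k = n then c * f n s else 0)" for s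
    by (simp add: fun_eq_iff unit_seq_def)
  then show ?thesis
    unfolding synthesis_def using sums_unique[OF sums_single[of n "\<lambda>_. c * f n _"]]
    by (simp add: fun_eq_iff)
qed

lemma synthesis_unit_seq: "synthesis f (unit_seq n) = f n"
  using synthesis_scaleR_unit_seq[of f 1 n] by simp

context
  fixes f :: "nat \<Rightarrow> 'a \<Rightarrow> real"
  assumes bounded: "\<And>n s. \<bar>f n s\<bar> \<le> 1"
begin

lemma summable_synthesis: "t \<in> seq_simplex \<Longrightarrow> summable (\<lambda>n. t n * f n s)"
  using seq_simplex_series_tail(1)[of t 0 "\<lambda>n. f n s" 1] bounded by simp

lemma synthesis_tail:
  "t \<in> seq_simplex \<Longrightarrow> \<bar>synthesis f t s - (\<Sum>n<M. t n * f n s)\<bar> \<le> (\<Sum>n. t (n + M))"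
  using seq_simplex_series_tail(2)[of t M "\<lambda>n. f n s" 1] bounded by (simp add: synthesis_def)

lemma abs_synthesis_le_1: "t \<in> seq_simplex \<Longrightarrow> \<bar>synthesis f t s\<bar> \<le> 1"
  using synthesis_tail[of t s 0] seq_simplex_tail_le_1[of t 0] by simp

lemma synthesis_scaleR_add:
  assumes "t \<in> seq_simplex" "t' \<in> seq_simplex"
  shows "synthesis f (a *\<^sub>R t + b *\<^sub>R t') = a *\<^sub>R synthesis f t + b *\<^sub>R synthesis f t'"
proof (rule ext)
  fix s
  have "(\<Sum>n. (a *\<^sub>R t + b *\<^sub>R t') n * f n s) = (\<Sum>n. a * (t n * f n s) + b * (t' n * f n s))"
    by (simp add: algebra_simps)
  also have "\<dots> = a * (\<Sum>n. t n * f n s) + b * (\<Sum>n. t' n * f n s)"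
    using summable_synthesis[OF assms(1)] summable_synthesis[OF assms(2)]
    by (simp add: suminf_add[symmetric] summable_mult suminf_mult)
  finally show "synthesis f (a *\<^sub>R t + b *\<^sub>R t') s = (a *\<^sub>R synthesis f t + b *\<^sub>R synthesis f t') s"
    by (simp add: synthesis_def)
qed

end

section \<open>Tent functions in \<open>C([0,1])\<close>\<close>

text \<open>
  \<open>tent n\<close> is the hat function of height 1 over the dyadic interval \<open>(2 ^ -(n+1), 2 ^ -n)\<close>,
  so distinct tents have disjoint supports.
\<close>
definition tent :: "nat \<Rightarrow> real \<Rightarrow> real" where
  "tent n s = max 0 (1 - \<bar>2 ^ (n + 2) * s - 3\<bar>)"

definition peak :: "nat \<Rightarrow> real" where
  "peak n = 3 / 2 ^ (n + 2)"

lemma tent_nonneg: "0 \<le> tent n s"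
  by (simp add: tent_def)

lemma tent_le_1: "tent n s \<le> 1"
  by (simp add: tent_def)

lemma abs_tent_le_1: "\<bar>tent n s\<bar> \<le> 1"
  by (simp add: tent_nonneg tent_le_1)

lemma tent_pos_imp:
  assumes "0 < tent n s"
  shows "1 / 2 < 2 ^ n * s" "2 ^ n * s < 1"
proof -
  have "(2::real) ^ (n + 2) * s = 4 * (2 ^ n * s)"
    by (simp add: power_add)
  then have "\<bar>4 * (2 ^ n * s) - 3\<bar> < 1"
    using assms by (simp add: tent_def)
  then show "1 / 2 < 2 ^ n * s" "2 ^ n * s < 1"
    unfolding abs_less_iff by linarith+
qed

lemma tent_disjoint:
  assumes "0 < tent j s" "0 < tent k s"
  shows "j = k"
proof (rule ccontr)
  have less: False if "0 < tent j s" "0 < tent k s" "j < k" for j k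
  proof -
    have "0 < 2 ^ j * s"
      using tent_pos_imp(1)[OF that(1)] by linarith
    then have "0 < s"
      by (simp add: zero_less_mult_iff)
    have "(2::real) * 2 ^ j \<le> 2 ^ k"
      using power_increasing[of "Suc j" k "2::real"] that(3) by simp
    then have "2 * 2 ^ j * s \<le> 2 ^ k * s"
      using \<open>0 < s\<close> by (simp add: mult_right_mono)
    then show False
      using tent_pos_imp(1)[OF that(1)] tent_pos_imp(2)[OF that(2)] by linarith
  qed
  assume "j \<noteq> k"
  then show False
    using less[OF assms] less[OF assms(2,1)] by linarith
qed

lemma tent_peak: "tent n (peak n) = 1"
  by (simp add: tent_def peak_def)

lemma tent_peak_other: "k \<noteq> n \<Longrightarrow> tent k (peak n) = 0"
  using tent_disjoint[of k "peak n" n] tent_peak[of n] tent_nonneg[of k "peak n"] by force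

lemma peak_in_unit_interval: "peak n \<in> {0..1}"
proof -
  have "(4::real) \<le> 2 ^ (n + 2)"
    using power_increasing[of 2 "n + 2" "2::real"] by simp
  then show ?thesis
    unfolding peak_def by (simp add: divide_le_eq del: power_Suc)
qed

lemma tent_outside:
  assumes "s \<notin> {0..1}"
  shows "tent n s = 0"
proof (rule ccontr)
  assume "tent n s \<noteq> 0"
  then have pos: "0 < tent n s"
    using tent_nonneg[of n s] by linarith
  from assms consider "s < 0" | "1 < s"
    by fastforce
  then show False
  proof cases
    case 1
    then have "2 ^ n * s < 0"
      by (simp add: mult_pos_neg)
    then show False
      using tent_pos_imp(1)[OF pos] by linarith
  next
    case 2
    then have "1 * 1 \<le> 2 ^ n * s"
      by (intro mult_mono) simp_all
    then show False
      using tent_pos_imp(2)[OF pos] by linarith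
  qed
qed

lemma abs_tent_diff_le_1: "\<bar>tent i s - tent j s\<bar> \<le> 1"
  using tent_nonneg[of i s] tent_le_1[of i s] tent_nonneg[of j s] tent_le_1[of j s] by simp

lemma continuous_on_tent: "continuous_on A (tent n)"
  unfolding tent_def by (intro continuous_intros)

lemma sum_tent_le_1:
  assumes "finite F"
  shows "(\<Sum>k\<in>F. tent k s) \<le> 1"
proof (cases "\<exists>j\<in>F. 0 < tent j s")
  case True
  then obtain j where "j \<in> F" "0 < tent j s"
    by blast
  then have "tent k s = 0" if "k \<in> F - {j}" for k
    using that tent_disjoint[of j s k] tent_nonneg[of k s] by force
  then have "(\<Sum>k\<in>F. tent k s) = tent j s"
    using sum.remove[OF assms \<open>j \<in> F\<close>, of "\<lambda>k. tent k s"] by simp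
  then show ?thesis
    by (simp add: tent_le_1)
next
  case False
  then have "(\<Sum>k\<in>F. tent k s) \<le> 0"
    by (intro sum_nonpos) (simp add: not_less)
  then show ?thesis
    by simp
qed

lemma synthesis_tent_peak:
  assumes "t \<in> seq_simplex"
  shows "synthesis tent t (peak m) = t m"
proof -
  have "(\<lambda>n. t n * tent n (peak m)) = (\<lambda>n. if n = m then t m else 0)"
    by (simp add: fun_eq_iff tent_peak tent_peak_other)
  then show ?thesis
    unfolding synthesis_def using sums_unique[OF sums_single[of m "\<lambda>_. t m"]] by simp
qed

lemma abs_synthesis_tent_diff_le_2:
  assumes "t \<in> seq_simplex"
  shows "\<bar>synthesis tent t s - tent m s\<bar> \<le> 2"
  using abs_synthesis_le_1[where f = tent, OF abs_tent_le_1 assms, of s] abs_tent_le_1[of m s] by linarith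

lemma synthesis_tent_in_C01:
  assumes t: "t \<in> seq_simplex"
  shows "synthesis tent t \<in> C01"
proof -
  have "uniform_limit {0..1} (\<lambda>M s. \<Sum>n<M. t n * tent n s) (synthesis tent t) sequentially"
    unfolding synthesis_def
    using seq_simplex_nonneg[OF t] tent_nonneg tent_le_1
    by (intro Weierstrass_m_test[OF _ seq_simplex_summable[OF t]]) (simp add: abs_mult mult_left_le)
  then have "continuous_on {0..1} (synthesis tent t)"
    by (rule uniform_limit_theorem[rotated])
      (simp_all add: always_eventually continuous_on_sum continuous_on_mult_left continuous_on_tent)
  then show ?thesis
    unfolding C01_def by (simp add: synthesis_def tent_outside)
qed

lemma subspace_C01: "subspace C01"
  unfolding subspace_def C01_def
  by (auto intro: continuous_on_add continuous_on_mult_left simp: plus_fun_def scaleR_fun_def)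

lemma norm_C01_le: "(\<And>s. s \<in> {0..1} \<Longrightarrow> \<bar>f s\<bar> \<le> B) \<Longrightarrow> norm_C01 f \<le> B"
  unfolding norm_C01_def by (rule cSup_least) auto

lemma abs_le_norm_C01:
  assumes "\<And>s. s \<in> {0..1} \<Longrightarrow> \<bar>f s\<bar> \<le> B" "s \<in> {0..1}"
  shows "\<bar>f s\<bar> \<le> norm_C01 f"
  unfolding norm_C01_def using assms by (intro cSup_upper bdd_aboveI2[where M = B]) auto

lemma norm_C01_eqI:
  assumes "\<And>s. s \<in> {0..1} \<Longrightarrow> \<bar>f s\<bar> \<le> B" "s \<in> {0..1}" "\<bar>f s\<bar> = B"
  shows "norm_C01 f = B"
  using norm_C01_le[of f B] abs_le_norm_C01[of f B s] assms by fastforce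

lemma norm_C01_zero: "norm_C01 0 = 0"
  by (rule norm_C01_eqI[where s = "0::real"]) simp_all

lemma norm_C01_nonneg_bounded:
  assumes "\<And>s. s \<in> {0..1} \<Longrightarrow> \<bar>f s\<bar> \<le> B"
  shows "0 \<le> norm_C01 f"
proof -
  have "\<bar>f 0\<bar> \<le> norm_C01 f"
    by (rule abs_le_norm_C01, rule assms, simp_all)
  then show ?thesis
    by linarith
qed

lemma norm_C01_nonneg:
  assumes "f \<in> C01"
  shows "0 \<le> norm_C01 f"
proof -
  have "bounded (f ` {0..1})"
    using assms unfolding C01_def by (intro compact_imp_bounded compact_continuous_image) auto
  then obtain B where "\<forall>x\<in>f ` {0..1}. norm x \<le> B"
    unfolding bounded_iff by blast
  then show ?thesis
    by (intro norm_C01_nonneg_bounded[where B = B]) simp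
qed

lemma norm_C01_synthesis_tent_partial_sums:
  assumes t: "t \<in> seq_simplex"
  shows "(\<lambda>M. norm_C01 (synthesis tent t - (\<Sum>n<M. t n *\<^sub>R tent n))) \<longlonglongrightarrow> 0"
proof (rule tendsto_sandwich[OF _ _ tendsto_const seq_simplex_tail_tendsto_zero[OF t]])
  have bound: "\<bar>(synthesis tent t - (\<Sum>n<M. t n *\<^sub>R tent n)) s\<bar> \<le> (\<Sum>n. t (n + M))" for M s
    using synthesis_tail[where f = tent, OF abs_tent_le_1 t] by (simp add: sum_fun_apply)
  show "\<forall>\<^sub>F M in sequentially. 0 \<le> norm_C01 (synthesis tent t - (\<Sum>n<M. t n *\<^sub>R tent n))"
    by (intro always_eventually allI norm_C01_nonneg_bounded) (rule bound)
  show "\<forall>\<^sub>F M in sequentially. norm_C01 (synthesis tent t - (\<Sum>n<M. t n *\<^sub>R tent n)) \<le> (\<Sum>n. t (n + M))"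
    using bound by (intro always_eventually allI norm_C01_le)
qed

lemma norm_C01_sum_tent_le:
  assumes "finite F"
  shows "norm_C01 (\<Sum>k\<in>F. tent k) \<le> sqrt (card F)"
proof (cases "F = {}")
  case False
  have "norm_C01 (\<Sum>k\<in>F. tent k) \<le> 1"
    using sum_tent_le_1[OF assms] tent_nonneg by (intro norm_C01_le) (simp add: sum_fun_apply sum_nonneg)
  then show ?thesis
    using one_le_sqrt_card[OF assms False] by linarith
qed (simp add: norm_C01_zero)

lemma norm_C01_tent_diff: "i \<noteq> j \<Longrightarrow> norm_C01 (tent i - tent j) = 1"
  by (intro norm_C01_eqI[OF _ peak_in_unit_interval, of _ _ i])
    (simp_all add: abs_tent_diff_le_1 tent_peak tent_peak_other)

lemma norm_C01_half_tent_diff: "norm_C01 ((1/2) *\<^sub>R tent 0 - tent 0) = 1/2"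
  by (intro norm_C01_eqI[OF _ peak_in_unit_interval, of _ _ 0]) (simp_all add: tent_nonneg tent_le_1 tent_peak)

lemma norm_C01_synthesis_tent_diff_le: "t \<in> seq_simplex \<Longrightarrow> norm_C01 (synthesis tent t - tent m) \<le> 2"
  by (intro norm_C01_le) (simp add: abs_synthesis_tent_diff_le_2)

lemma exists_norm_C01_synthesis_tent_diff_gt:
  assumes t: "t \<in> seq_simplex" and "0 < \<epsilon>"
  shows "\<exists>m\<ge>n. 1 - \<epsilon> < norm_C01 (synthesis tent t - tent m)"
proof -
  obtain m where "n \<le> m" "t m < \<epsilon>"
    using seq_simplex_exists_small[OF assms] .
  moreover have "\<bar>(synthesis tent t - tent m) (peak m)\<bar> \<le> norm_C01 (synthesis tent t - tent m)"
    by (intro abs_le_norm_C01[where B = 2] peak_in_unit_interval) (simp add: abs_synthesis_tent_diff_le_2[OF t])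
  ultimately show ?thesis
    using seq_simplex_le_1[OF t, of m] by (intro exI[of _ m]) (simp add: synthesis_tent_peak[OF t] tent_peak)
qed

lemma C01_example: "has_fpf_orbitally_kannan_example C01 norm_C01"
proof (rule has_fpf_orbitally_kannan_example_from_seq_simplex
    [where g = "synthesis tent" and c = 1 and s = "(1/2) *\<^sub>R unit_seq 0"])
  show "synthesis tent (a *\<^sub>R t + (1 - a) *\<^sub>R t') = a *\<^sub>R synthesis tent t + (1 - a) *\<^sub>R synthesis tent t'"
    if "t \<in> seq_simplex" "t' \<in> seq_simplex" for t t' and a :: real
    using synthesis_scaleR_add[where f = tent, OF abs_tent_le_1 that] .
  show "\<exists>B. \<forall>m. norm_C01 (synthesis tent t - synthesis tent (unit_seq m)) \<le> B" if "t \<in> seq_simplex" for t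
    using norm_C01_synthesis_tent_diff_le[OF that] by (auto simp: synthesis_unit_seq)
qed (simp_all add: synthesis_unit_seq synthesis_scaleR_unit_seq subspace_C01 norm_C01_nonneg norm_C01_zero
    synthesis_tent_in_C01 norm_C01_synthesis_tent_partial_sums norm_C01_sum_tent_le norm_C01_tent_diff
    exists_norm_C01_synthesis_tent_diff_gt norm_C01_half_tent_diff scaleR_unit_seq_in_seq_simplex)

section \<open>Rademacher functions in \<open>L\<^sup>1([0,1])\<close>\<close>

abbreviation lebesgue_01 :: "real measure" where
  "lebesgue_01 \<equiv> lebesgue_on {0..1}"

lemma finite_measure_lebesgue_01: "finite_measure lebesgue_01"
  by (rule finite_measureI) (simp add: emeasure_restrict_space)

lemma borel_measurable_lebesgue_01: "f \<in> borel_measurable borel \<Longrightarrow> f \<in> borel_measurable lebesgue_01"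
  by (metis measurable_lborel2 measurable_restrict_space1 measurable_completion)

lemma measure_lebesgue_01 [simp]: "measure lebesgue_01 {0..1} = 1"
  by (simp add: measure_restrict_space)

lemma integral_const_lebesgue_01: "integral\<^sup>L lebesgue_01 (\<lambda>_. c) = (c :: real)"
  by simp

lemma integrable_bounded_lebesgue_01:
  fixes f :: "real \<Rightarrow> real"
  assumes "f \<in> borel_measurable lebesgue_01" "\<And>s. s \<in> {0..1} \<Longrightarrow> \<bar>f s\<bar> \<le> B"
  shows "integrable lebesgue_01 f"
  using assms by (intro finite_measure.integrable_const_bound[OF finite_measure_lebesgue_01, where B = B])
    auto

lemma integral_lebesgue_01_eq:
  fixes f :: "real \<Rightarrow> real"
  assumes "integrable lebesgue_01 f" "(f has_integral c) {0..1}"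
  shows "integral\<^sup>L lebesgue_01 f = c"
  using has_integral_integral_lebesgue_on[OF assms(1)] assms(2) has_integral_unique by auto

lemma has_integral_step_function:
  fixes h :: "int \<Rightarrow> real"
  assumes "0 < L"
  shows "((\<lambda>s. h \<lfloor>real L * s\<rfloor>) has_integral (\<Sum>m<L. h (int m)) / real L) {0..1}"
proof -
  have "((\<lambda>s. h \<lfloor>real L * s\<rfloor>) has_integral (\<Sum>m<K. h (int m)) / real L) {0..real K / real L}"
    if "K \<le> L" for K
    using that
  proof (induction K)
    case 0
    then show ?case
      using has_integral_refl(2)[of "\<lambda>s. h \<lfloor>real L * s\<rfloor>" 0] by simp
  next
    case (Suc K)
    let ?I = "{real K / real L..real (Suc K) / real L}"
    have "((\<lambda>s. h (int K)) has_integral h (int K) / real L) ?I"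
      using has_integral_const_real[of "h (int K)" "real K / real L" "real (Suc K) / real L"] assms
      by (simp add: divide_simps)
    then have step: "((\<lambda>s. h \<lfloor>real L * s\<rfloor>) has_integral h (int K) / real L) ?I"
    proof (rule has_integral_spike_finite[rotated 2])
      fix s assume "s \<in> ?I - {real (Suc K) / real L}"
      then have "real K \<le> real L * s" "real L * s < real K + 1"
        using assms by (auto simp: field_simps)
      then have "\<lfloor>real L * s\<rfloor> = int K"
        by (simp add: floor_eq_iff)
      then show "h \<lfloor>real L * s\<rfloor> = h (int K)"
        by simp
    qed simp
    have "((\<lambda>s. h \<lfloor>real L * s\<rfloor>) has_integral
        (\<Sum>m<K. h (int m)) / real L + h (int K) / real L) {0..real (Suc K) / real L}"
      using Suc by (intro has_integral_combine[OF _ _ _ step]) (auto simp: divide_right_mono)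
    then show ?case
      by (simp add: add_divide_distrib)
  qed
  from this[of L] show ?thesis
    using assms by simp
qed

definition alt_sign :: "int \<Rightarrow> real" where
  "alt_sign m = (if even m then 1 else -1)"

definition rademacher :: "nat \<Rightarrow> real \<Rightarrow> real" where
  "rademacher n s = alt_sign \<lfloor>2 ^ (n + 1) * s\<rfloor>"

lemma alt_sign_measurable [measurable]: "alt_sign \<in> measurable (count_space UNIV) borel"
  by simp

lemma rademacher_measurable [measurable]: "rademacher n \<in> borel_measurable lebesgue_01"
  by (rule borel_measurable_lebesgue_01) (unfold rademacher_def, measurable)

lemma abs_rademacher: "\<bar>rademacher n s\<bar> = 1"
  by (simp add: rademacher_def alt_sign_def)

lemma rademacher_mult_self: "rademacher n s * rademacher n s = 1"
  by (simp add: rademacher_def alt_sign_def)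

lemma integrable_rademacher: "integrable lebesgue_01 (rademacher n)"
  by (rule integrable_bounded_lebesgue_01[where B = 1]) (simp_all add: abs_rademacher)

lemma integrable_rademacher_mult: "integrable lebesgue_01 (\<lambda>s. rademacher i s * rademacher j s)"
  by (rule integrable_bounded_lebesgue_01[where B = 1]) (simp_all add: abs_mult abs_rademacher)

lemma sum_even_odd_pairs: "(\<Sum>m<2 * K. f m) = (\<Sum>p<K. f (2 * p) + f (2 * p + 1))"
  for f :: "nat \<Rightarrow> real"
  by (induction K) (simp_all add: algebra_simps)

text \<open>
  For \<open>i < j\<close> the product \<open>rademacher i * rademacher j\<close> is a step function on the dyadic
  intervals of length \<open>2 ^ -(j+1)\<close>, and its values on the two halves of each interval of
  length \<open>2 ^ -j\<close> cancel.
\<close>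
lemma has_integral_rademacher_mult_less:
  assumes "i < j"
  shows "((\<lambda>s. rademacher i s * rademacher j s) has_integral 0) {0..1}"
proof -
  define d where "d = j - i"
  have "1 \<le> d" "j + 1 = (i + 1) + d"
    using assms by (auto simp: d_def)
  define h where "h m = alt_sign (m div 2 ^ d) * alt_sign m" for m :: int
  have step: "rademacher i s * rademacher j s = h \<lfloor>real (2 ^ (j + 1)) * s\<rfloor>" for s
  proof -
    have "(2::real) ^ (i + 1) * s = (2 ^ (j + 1) * s) / real_of_int (2 ^ d)"
      using \<open>j + 1 = (i + 1) + d\<close> by (simp add: power_add)
    then have "\<lfloor>(2::real) ^ (i + 1) * s\<rfloor> = \<lfloor>2 ^ (j + 1) * s\<rfloor> div 2 ^ d"
      using floor_divide_real_eq_div[of "2 ^ d" "2 ^ (j + 1) * s"] by simp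
    then show ?thesis
      unfolding rademacher_def h_def by simp
  qed
  have cancel: "h (int (2 * p)) + h (int (2 * p + 1)) = 0" for p
  proof -
    define q :: int where "q = 2 ^ (d - 1)"
    have q: "2 ^ d = 2 * q" "0 < q"
      using \<open>1 \<le> d\<close> by (cases d) (simp_all add: q_def)
    have "int (2 * p + 1) div 2 ^ d = int p div q" "int (2 * p) div 2 ^ d = int p div q"
      using q zdiv_zmult2_eq[of q _ 2] by simp_all
    then show ?thesis
      unfolding h_def by (simp add: alt_sign_def)
  qed
  have "(\<Sum>m<2 ^ (j + 1). h (int m)) = 0"
    using sum_even_odd_pairs[of "\<lambda>m. h (int m)" "2 ^ j"] cancel by simp
  with has_integral_step_function[of "2 ^ (j + 1)" h] show ?thesis
    by (simp add: step)
qed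

lemma integral_rademacher_mult:
  "integral\<^sup>L lebesgue_01 (\<lambda>s. rademacher i s * rademacher j s) = (if i = j then 1 else 0)"
proof -
  consider "i = j" | "i < j" | "j < i"
    by linarith
  then have "((\<lambda>s. rademacher i s * rademacher j s) has_integral (if i = j then 1 else 0)) {0..1}"
  proof cases
    case 1
    then show ?thesis
      using has_integral_const_real[of "1::real" 0 1] by (simp add: rademacher_mult_self)
  next
    case 2
    then show ?thesis
      using has_integral_rademacher_mult_less by simp
  next
    case 3
    then show ?thesis
      using has_integral_rademacher_mult_less[OF 3] by (simp add: mult.commute)
  qed
  then show ?thesis
    by (rule integral_lebesgue_01_eq[OF integrable_rademacher_mult])
qed

lemma integral_abs_rademacher_diff:
  "integral\<^sup>L lebesgue_01 (\<lambda>s. \<bar>rademacher i s - rademacher j s\<bar>) = (if i = j then 0 else 1)"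
proof -
  have "\<bar>rademacher i s - rademacher j s\<bar> = 1 - rademacher i s * rademacher j s" for s
    by (simp add: rademacher_def alt_sign_def)
  then show ?thesis
    by (simp add: integrable_rademacher_mult integral_const_lebesgue_01 integral_rademacher_mult)
qed

text \<open>By orthonormality \<open>\<integral>(\<Sum>k\<in>F. r\<^sub>k)\<^sup>2 = card F\<close>, and \<open>\<bar>x\<bar> \<le> x\<^sup>2 / (2 c) + c / 2\<close> with \<open>c = \<surd>(card F)\<close>.\<close>
lemma integral_abs_sum_rademacher_le:
  assumes "finite F"
  shows "integral\<^sup>L lebesgue_01 (\<lambda>s. \<bar>\<Sum>k\<in>F. rademacher k s\<bar>) \<le> sqrt (card F)"
proof (cases "F = {}")
  case False
  define c where "c = sqrt (card F)"
  have "0 < c"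
    using assms False by (simp add: c_def card_gt_0_iff)
  let ?S = "\<lambda>s. \<Sum>k\<in>F. rademacher k s"
  have square: "(?S s)\<^sup>2 = (\<Sum>j\<in>F. \<Sum>k\<in>F. rademacher j s * rademacher k s)" for s
    by (simp add: power2_eq_square sum_product)
  have "integral\<^sup>L lebesgue_01 (\<lambda>s. (?S s)\<^sup>2) = real (card F)"
    unfolding square using assms
    by (simp add: integrable_rademacher_mult integral_rademacher_mult)
  have pointwise: "\<bar>?S s\<bar> \<le> (?S s)\<^sup>2 / (2 * c) + c / 2" for s
  proof -
    have "2 * c * \<bar>?S s\<bar> \<le> (?S s)\<^sup>2 + c * c"
      using zero_le_power2[of "\<bar>?S s\<bar> - c"] by (simp add: power2_eq_square algebra_simps)
    then show ?thesis
      using \<open>0 < c\<close> by (simp add: field_simps)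
  qed
  have "integral\<^sup>L lebesgue_01 (\<lambda>s. \<bar>?S s\<bar>) \<le> integral\<^sup>L lebesgue_01 (\<lambda>s. (?S s)\<^sup>2 / (2 * c) + c / 2)"
    using pointwise unfolding square
    by (intro integral_mono) (simp_all add: integrable_rademacher integrable_rademacher_mult)
  also have "\<dots> = real (card F) / (2 * c) + c / 2"
    using \<open>integral\<^sup>L lebesgue_01 (\<lambda>s. (?S s)\<^sup>2) = real (card F)\<close> unfolding square
    by (simp add: integrable_rademacher_mult integral_const_lebesgue_01)
  also have "\<dots> = c"
    using \<open>0 < c\<close> by (simp add: c_def field_simps)
  finally show ?thesis
    by (simp add: c_def)
qed simp

lemma synthesis_rademacher_measurable:
  assumes "t \<in> seq_simplex"
  shows "synthesis rademacher t \<in> borel_measurable lebesgue_01"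
proof (rule borel_measurable_LIMSEQ_real)
  show "(\<lambda>M. \<Sum>n<M. t n * rademacher n s) \<longlonglongrightarrow> synthesis rademacher t s" for s
    unfolding synthesis_def using abs_rademacher
    by (intro summable_LIMSEQ summable_synthesis[OF _ assms]) simp
qed measurable

lemma integrable_synthesis_rademacher:
  "t \<in> seq_simplex \<Longrightarrow> integrable lebesgue_01 (synthesis rademacher t)"
  using abs_synthesis_le_1[where f = rademacher] abs_rademacher
  by (intro integrable_bounded_lebesgue_01[where B = 1] synthesis_rademacher_measurable) simp_all

lemma l1rel_refl: "integrable lebesgue_01 f \<Longrightarrow> l1rel f f"
  by (simp add: l1rel_def)

lemma norm_L1_abs_L1:
  "integrable lebesgue_01 f \<Longrightarrow> norm_L1 (abs_L1 f) = integral\<^sup>L lebesgue_01 (\<lambda>s. \<bar>f s\<bar>)"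
  by (rule norm_L1.abs_eq[OF l1rel_refl])

lemma abs_L1_add:
  "integrable lebesgue_01 f \<Longrightarrow> integrable lebesgue_01 g \<Longrightarrow>
    abs_L1 f + abs_L1 g = abs_L1 (\<lambda>s. f s + g s)"
  by (rule plus_L1.abs_eq[OF l1rel_refl l1rel_refl])

lemma abs_L1_diff:
  "integrable lebesgue_01 f \<Longrightarrow> integrable lebesgue_01 g \<Longrightarrow>
    abs_L1 f - abs_L1 g = abs_L1 (\<lambda>s. f s - g s)"
  by (rule minus_L1.abs_eq[OF l1rel_refl l1rel_refl])

lemma abs_L1_scaleR: "integrable lebesgue_01 f \<Longrightarrow> c *\<^sub>R abs_L1 f = abs_L1 (\<lambda>s. c * f s)"
  by (rule scaleR_L1.abs_eq[OF l1rel_refl])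

lemma abs_L1_sum:
  assumes "\<And>k. k \<in> F \<Longrightarrow> integrable lebesgue_01 (f k)"
  shows "(\<Sum>k\<in>F. c k *\<^sub>R abs_L1 (f k)) = abs_L1 (\<lambda>s. \<Sum>k\<in>F. c k * f k s)"
  using assms
proof (induction F rule: infinite_finite_induct)
  case (insert k F)
  then show ?case
    by (simp add: abs_L1_scaleR abs_L1_add)
qed (simp_all add: zero_L1_def)

lemma norm_L1_diff:
  "integrable lebesgue_01 f \<Longrightarrow> integrable lebesgue_01 g \<Longrightarrow>
    norm_L1 (abs_L1 f - abs_L1 g) = integral\<^sup>L lebesgue_01 (\<lambda>s. \<bar>f s - g s\<bar>)"
  by (simp add: abs_L1_diff norm_L1_abs_L1)

lemma norm_L1_nonneg: "0 \<le> norm_L1 x"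
  by (induction x rule: L1.abs_induct) (simp add: norm_L1.abs_eq)

lemma norm_L1_zero: "norm_L1 0 = 0"
  by (simp add: zero_L1_def norm_L1_abs_L1)

text \<open>
  Integrating \<open>1 - P r\<^sub>m \<le> \<bar>P - r\<^sub>m\<bar>\<close> for a partial sum \<open>P\<close> of the series, which is orthogonal
  to \<open>r\<^sub>m\<close> once \<open>m\<close> lies beyond its indices, shows that the series stays at distance almost 1
  from \<open>r\<^sub>m\<close>.
\<close>
lemma exists_norm_L1_synthesis_rademacher_diff_gt:
  assumes t: "t \<in> seq_simplex" and "0 < \<epsilon>"
  shows "\<exists>m\<ge>n. 1 - \<epsilon> < norm_L1 (abs_L1 (synthesis rademacher t) - abs_L1 (rademacher m))"
proof -
  obtain K where "\<forall>M\<ge>K. norm ((\<Sum>k. t (k + M)) - 0) < \<epsilon>"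
    using LIMSEQ_D[OF seq_simplex_tail_tendsto_zero[OF t] \<open>0 < \<epsilon>\<close>] by blast
  from this[rule_format, OF order_refl] have K: "(\<Sum>k. t (k + K)) < \<epsilon>"
    by simp
  define m where "m = max n K"
  let ?P = "\<lambda>s. \<Sum>k<K. t k * rademacher k s"
  have pointwise: "1 - (\<Sum>k. t (k + K)) - (\<Sum>k<K. t k * (rademacher k s * rademacher m s))
      \<le> \<bar>synthesis rademacher t s - rademacher m s\<bar>" for s
  proof -
    have "1 - ?P s * rademacher m s = rademacher m s * (rademacher m s - ?P s)"
      using rademacher_mult_self[of m s] by (simp add: algebra_simps)
    also have "\<dots> \<le> \<bar>?P s - rademacher m s\<bar>"
      using abs_ge_self[of "rademacher m s * (rademacher m s - ?P s)"]
      by (simp add: abs_mult abs_rademacher abs_minus_commute)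
    finally have "1 - ?P s * rademacher m s \<le> \<bar>?P s - rademacher m s\<bar>" .
    moreover have "\<bar>synthesis rademacher t s - ?P s\<bar> \<le> (\<Sum>k. t (k + K))"
      using synthesis_tail[where f = rademacher] abs_rademacher t by simp
    moreover have "?P s * rademacher m s = (\<Sum>k<K. t k * (rademacher k s * rademacher m s))"
      by (simp add: sum_distrib_right mult.assoc)
    ultimately show ?thesis
      by linarith
  qed
  have "(\<Sum>k<K. t k * integral\<^sup>L lebesgue_01 (\<lambda>s. rademacher k s * rademacher m s)) = 0"
    by (rule sum.neutral) (auto simp: integral_rademacher_mult m_def)
  then have "integral\<^sup>L lebesgue_01
      (\<lambda>s. 1 - (\<Sum>k. t (k + K)) - (\<Sum>k<K. t k * (rademacher k s * rademacher m s))) = 1 - (\<Sum>k. t (k + K))"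
    by (simp add: integrable_rademacher_mult)
  moreover have "integral\<^sup>L lebesgue_01
      (\<lambda>s. 1 - (\<Sum>k. t (k + K)) - (\<Sum>k<K. t k * (rademacher k s * rademacher m s)))
      \<le> integral\<^sup>L lebesgue_01 (\<lambda>s. \<bar>synthesis rademacher t s - rademacher m s\<bar>)"
    using pointwise integrable_synthesis_rademacher[OF t]
    by (intro integral_mono) (simp_all add: integrable_rademacher integrable_rademacher_mult)
  ultimately show ?thesis
    using K integrable_synthesis_rademacher[OF t]
    by (intro exI[of _ m]) (simp add: m_def norm_L1_diff integrable_rademacher)
qed

lemma abs_L1_synthesis_rademacher_scaleR_add:
  assumes "t \<in> seq_simplex" "t' \<in> seq_simplex"
  shows "abs_L1 (synthesis rademacher (a *\<^sub>R t + b *\<^sub>R t'))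
    = a *\<^sub>R abs_L1 (synthesis rademacher t) + b *\<^sub>R abs_L1 (synthesis rademacher t')"
  using assms synthesis_scaleR_add[where f = rademacher, OF _ assms, of a b] abs_rademacher
  by (simp add: integrable_synthesis_rademacher abs_L1_scaleR abs_L1_add plus_fun_def)

lemma norm_L1_synthesis_rademacher_partial_sums:
  assumes t: "t \<in> seq_simplex"
  shows "(\<lambda>M. norm_L1 (abs_L1 (synthesis rademacher t) - (\<Sum>n<M. t n *\<^sub>R abs_L1 (rademacher n)))) \<longlonglongrightarrow> 0"
proof (rule tendsto_sandwich[OF _ _ tendsto_const seq_simplex_tail_tendsto_zero[OF t]])
  have "norm_L1 (abs_L1 (synthesis rademacher t) - (\<Sum>n<M. t n *\<^sub>R abs_L1 (rademacher n)))
      = integral\<^sup>L lebesgue_01 (\<lambda>s. \<bar>synthesis rademacher t s - (\<Sum>n<M. t n * rademacher n s)\<bar>)" for M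
    by (simp add: abs_L1_sum integrable_rademacher norm_L1_diff integrable_synthesis_rademacher[OF t])
  also have "\<dots> M \<le> integral\<^sup>L lebesgue_01 (\<lambda>s. \<Sum>n. t (n + M))" for M
    using synthesis_tail[where f = rademacher] abs_rademacher t integrable_synthesis_rademacher[OF t]
    by (intro integral_mono) (simp_all add: integrable_rademacher)
  finally show "\<forall>\<^sub>F M in sequentially.
      norm_L1 (abs_L1 (synthesis rademacher t) - (\<Sum>n<M. t n *\<^sub>R abs_L1 (rademacher n))) \<le> (\<Sum>n. t (n + M))"
    by (intro always_eventually allI) simp
qed (simp add: norm_L1_nonneg)

lemma norm_L1_sum_rademacher_le: "finite F \<Longrightarrow> norm_L1 (\<Sum>k\<in>F. abs_L1 (rademacher k)) \<le> sqrt (card F)"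
  using abs_L1_sum[of F rademacher "\<lambda>_. 1"] integral_abs_sum_rademacher_le[of F]
  by (simp add: integrable_rademacher norm_L1_abs_L1)

lemma norm_L1_rademacher_diff: "i \<noteq> j \<Longrightarrow> norm_L1 (abs_L1 (rademacher i) - abs_L1 (rademacher j)) = 1"
  by (simp add: integrable_rademacher norm_L1_diff integral_abs_rademacher_diff)

lemma norm_L1_half_rademacher_diff: "norm_L1 (abs_L1 ((1/2) *\<^sub>R rademacher 0) - abs_L1 (rademacher 0)) = 1/2"
proof -
  have "\<bar>1/2 * rademacher 0 s - rademacher 0 s\<bar> = 1/2" for s
    by (simp add: rademacher_def alt_sign_def)
  then show ?thesis
    by (simp add: scaleR_fun_def integrable_rademacher norm_L1_diff)
qed

lemma norm_L1_synthesis_rademacher_diff_le: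
  assumes t: "t \<in> seq_simplex"
  shows "norm_L1 (abs_L1 (synthesis rademacher t) - abs_L1 (rademacher m)) \<le> 2"
proof -
  have "\<bar>synthesis rademacher t s - rademacher m s\<bar> \<le> 2" for s
    using abs_synthesis_le_1[where f = rademacher, OF abs_rademacher[THEN eq_refl] t, of s]
      abs_rademacher[of m s] by linarith
  then have "integral\<^sup>L lebesgue_01 (\<lambda>s. \<bar>synthesis rademacher t s - rademacher m s\<bar>)
      \<le> integral\<^sup>L lebesgue_01 (\<lambda>s. 2)"
    using integrable_synthesis_rademacher[OF t] by (intro integral_mono) (simp_all add: integrable_rademacher)
  then show ?thesis
    by (simp add: integrable_rademacher norm_L1_diff integrable_synthesis_rademacher[OF t])
qed

lemma L1_example: "has_fpf_orbitally_kannan_example (UNIV :: L1 set) norm_L1"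
proof (rule has_fpf_orbitally_kannan_example_from_seq_simplex
    [where g = "\<lambda>t. abs_L1 (synthesis rademacher t)" and c = 1 and s = "(1/2) *\<^sub>R unit_seq 0"])
  show "\<exists>B. \<forall>m. norm_L1 (abs_L1 (synthesis rademacher t) - abs_L1 (synthesis rademacher (unit_seq m))) \<le> B"
    if "t \<in> seq_simplex" for t
    using norm_L1_synthesis_rademacher_diff_le[OF that] by (auto simp: synthesis_unit_seq)
qed (simp_all add: synthesis_unit_seq synthesis_scaleR_unit_seq norm_L1_nonneg norm_L1_zero
    abs_L1_synthesis_rademacher_scaleR_add norm_L1_synthesis_rademacher_partial_sums norm_L1_sum_rademacher_le
    norm_L1_rademacher_diff exists_norm_L1_synthesis_rademacher_diff_gt norm_L1_half_rademacher_diff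
    scaleR_unit_seq_in_seq_simplex)

theorem corollary4p2:
  shows "has_fpf_orbitally_kannan_example (UNIV :: L1 set) norm_L1
       \<and> has_fpf_orbitally_kannan_example C01 norm_C01
       \<and> has_fpf_orbitally_kannan_example c0 sup_norm_seq
       \<and> has_fpf_orbitally_kannan_example l2 norm_l2_new"
  using L1_example C01_example c0_example l2_example by blast

end
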